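(* Let $m\in\mathbb{N}$, let $\Delta\subseteq 2^{[m]}$ be a simplicial complex with facets $F_1,\dots,F_s$, and let $T\subseteq[m]$ be an independent set of $\Delta$, i.e. $|T\cap F_k|\le1$ for all $k\in[s]$. Fix $r_j\in\mathbb{N}$ for $j\in[m]\setminus T$. Put $R_i=\mathbb{N}$ for $i\in T$ and $R_j=[r_j]$ for $j\in[m]\setminus T$, $\mathcal{R}=\prod_{i=1}^mR_i$ and $\mathcal{R}_{F_k}=\prod_{j\in F_k}R_j$; for $\mathbf{i}=(i_1,\dots,i_m)\in\mathcal{R}$ write $\mathbf{i}_{F_k}=(i_j)_{j\in F_k}$. Let $\mu_{\Delta,T}:\mathbb{Z}^{(\mathcal{R})}\to\bigoplus_{k=1}^s\mathbb{Z}^{(\mathcal{R}_{F_k})}$ be the group homomorphism with $\mu_{\Delta,T}(\mathbf{e}_{\mathbf{i}})=(\mathbf{e}_{\mathbf{i}_{F_1}},\dots,\mathbf{e}_{\mathbf{i}_{F_s}})$. Then the lattice $\ker\mu_{\Delta,T}\subseteq\mathbb{Z}^{(\mathcal{R})}$ has a finite equivariant Markov basis.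
   Context: $\mathbb{N}=\{1,2,\dots\}$, $[r]=\{1,\dots,r\}$. For a set $J$, $\mathbb{Z}^{(J)}$ is the free abelian group with basis $J$ (finitely supported integer vectors, standard basis $\mathbf{e}_j$), and $\mathbb{Z}_{\ge0}^{(J)}$ its nonnegative vectors. $\mathrm{Sym}$ is the group of permutations of $\mathbb{N}$ fixing all but finitely many elements; it acts on $\mathbb{Z}^{(\mathcal{R})}$ by the linear extension of $\sigma(\mathbf{e}_{\mathbf{i}})=\mathbf{e}_{\mathbf{i}'}$, where $i'_t=\sigma(i_t)$ for $t\in T$ and $i'_t=i_t$ for $t\notin T$. For a lattice (subgroup) $L\subseteq\mathbb{Z}^{(J)}$ and $\mathbf{u}\in\mathbb{Z}_{\ge0}^{(J)}$, the fiber is $F_L(\mathbf{u})=\{\mathbf{v}\in\mathbb{Z}_{\ge0}^{(J)}\mid\mathbf{u}-\mathbf{v}\in L\}$. A subset $\mathcal{B}\subseteq L$ is a Markov basis of $L$ if for every $\mathbf{u}\in\mathbb{Z}_{\ge0}^{(J)}$ the graph with vertex set $F_L(\mathbf{u})$ and an edge between $\mathbf{v},\mathbf{w}$ whenever $\mathbf{v}-\mathbf{w}\in\pm\mathcal{B}$ is connected (any two vertices joined by a finite path). A subset $\mathcal{B}$ of a $\mathrm{Sym}$-invariant lattice $L$ is an equivariant Markov basis if $\mathrm{Sym}(\mathcal{B})=\{\sigma(\mathbf{b})\mid\sigma\in\mathrm{Sym},\mathbf{b}\in\mathcal{B}\}$ is a Markov basis of $L$. *)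

theory Defs
  imports Main
begin

definition fin_vecs :: "'a set \<Rightarrow> ('a \<Rightarrow> int) set" where
  "fin_vecs J = {u. finite {i. u i \<noteq> 0} \<and> (\<forall>i. u i \<noteq> 0 \<longrightarrow> i \<in> J)}"

definition nonneg_vecs :: "'a set \<Rightarrow> ('a \<Rightarrow> int) set" where
  "nonneg_vecs J = {u \<in> fin_vecs J. \<forall>i. u i \<ge> 0}"

definition fiber :: "'a set \<Rightarrow> ('a \<Rightarrow> int) set \<Rightarrow> ('a \<Rightarrow> int) \<Rightarrow> ('a \<Rightarrow> int) set" where
  "fiber J L u = {v \<in> nonneg_vecs J. u - v \<in> L}"

definition markov_basis :: "'a set \<Rightarrow> ('a \<Rightarrow> int) set \<Rightarrow> ('a \<Rightarrow> int) set \<Rightarrow> bool" where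
  "markov_basis J L B \<longleftrightarrow> B \<subseteq> L \<and>
     (\<forall>u \<in> nonneg_vecs J. \<forall>v \<in> fiber J L u. \<forall>w \<in> fiber J L u.
        (\<lambda>x y. x \<in> fiber J L u \<and> y \<in> fiber J L u \<and> (x - y \<in> B \<or> y - x \<in> B))\<^sup>*\<^sup>* v w)"

text \<open>Permutations of N = {1,2,...} fixing all but finitely many elements
  (encoded on nat, fixing 0).\<close>
definition Sym :: "(nat \<Rightarrow> nat) set" where
  "Sym = {\<sigma>. bij \<sigma> \<and> \<sigma> 0 = 0 \<and> finite {n. \<sigma> n \<noteq> n}}"

definition act_idx :: "nat set \<Rightarrow> (nat \<Rightarrow> nat) \<Rightarrow> (nat \<Rightarrow> nat) \<Rightarrow> (nat \<Rightarrow> nat)" where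
  "act_idx T \<sigma> i = (\<lambda>t. if t \<in> T then \<sigma> (i t) else i t)"

text \<open>Linear extension of e_i \<mapsto> e_{\<sigma> i}.\<close>
definition act_vec :: "nat set \<Rightarrow> (nat \<Rightarrow> nat) \<Rightarrow> ((nat \<Rightarrow> nat) \<Rightarrow> int) \<Rightarrow> ((nat \<Rightarrow> nat) \<Rightarrow> int)" where
  "act_vec T \<sigma> u = (\<lambda>j. \<Sum>i \<in> {i. u i \<noteq> 0 \<and> act_idx T \<sigma> i = j}. u i)"

definition equivariant_markov_basis ::
  "nat set \<Rightarrow> (nat \<Rightarrow> nat) set \<Rightarrow> ((nat \<Rightarrow> nat) \<Rightarrow> int) set \<Rightarrow> ((nat \<Rightarrow> nat) \<Rightarrow> int) set \<Rightarrow> bool" where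
  "equivariant_markov_basis T J L B \<longleftrightarrow>
     B \<subseteq> L \<and> markov_basis J L {act_vec T \<sigma> b | \<sigma> b. \<sigma> \<in> Sym \<and> b \<in> B}"

text \<open>Tuples (i_1,...,i_m) encoded as functions nat => nat that are 0 outside [m].\<close>
definition idx_set :: "nat \<Rightarrow> nat set \<Rightarrow> (nat \<Rightarrow> nat) \<Rightarrow> (nat \<Rightarrow> nat) set" where
  "idx_set m T r = {i. (\<forall>j. j \<notin> {1..m} \<longrightarrow> i j = 0) \<and>
      (\<forall>j \<in> {1..m}. (j \<in> T \<longrightarrow> 1 \<le> i j) \<and> (j \<notin> T \<longrightarrow> 1 \<le> i j \<and> i j \<le> r j))}"

definition restr :: "nat set \<Rightarrow> (nat \<Rightarrow> nat) \<Rightarrow> (nat \<Rightarrow> nat)" where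
  "restr F i = (\<lambda>j. if j \<in> F then i j else 0)"

definition mu_comp :: "nat set \<Rightarrow> ((nat \<Rightarrow> nat) \<Rightarrow> int) \<Rightarrow> (nat \<Rightarrow> nat) \<Rightarrow> int" where
  "mu_comp F u = (\<lambda>y. \<Sum>i \<in> {i. u i \<noteq> 0 \<and> restr F i = y}. u i)"

definition ker_mu :: "nat \<Rightarrow> nat set list \<Rightarrow> nat set \<Rightarrow> (nat \<Rightarrow> nat) \<Rightarrow> ((nat \<Rightarrow> nat) \<Rightarrow> int) set" where
  "ker_mu m Fs T r = {u \<in> fin_vecs (idx_set m T r). \<forall>k < length Fs. mu_comp (Fs ! k) u = (\<lambda>_. 0)}"

end

theory Submission
  imports Defs "HOL.Topological_Spaces" "HOL-Library.Multiset"
begin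

text \<open>
  Nonnegative vectors are multisets of indices, and \<open>u - v\<close> lies in \<open>ker \<mu>\<close> iff the multisets
  have the same facet margins.  An index splits into its shape (the coordinates outside \<open>T\<close>,
  with finitely many values) and its labels at the coordinates \<open>t \<in> T\<close>.  As every facet meets
  \<open>T\<close> in at most one point, the margins only see, for each \<open>t\<close> and each label \<open>a\<close>, the
  multiset of shapes carrying label \<open>a\<close> at \<open>t\<close>.  Exchanging the \<open>t\<close>-labels of two indices
  of the same shape is a move of degree two, and such moves connect any two multisets with
  the same labelled shapes.

  For fixed \<open>t\<close>, the pairs of shape multisets with equal margins on the facets through \<open>t\<close>
  have a finite basis by Dickson's lemma.  Decomposing all label slices of a pair \<open>(U, V)\<close>
  into basis elements and forgetting the labels gives a profile over a finite alphabet, so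
  by Dickson's lemma again some profile from a finite list lies below it.  Realising that
  profile splits off, up to label exchanges, a pair \<open>(X, Y)\<close> of bounded degree with equal
  margins, and induction on the degree connects every fibre by moves of bounded degree.
  Such a move involves boundedly many labels, which a finitary permutation maps into a
  fixed interval, so finitely many moves generate all of them under \<open>Sym\<close>.
\<close>

lemma member_le_sum_mset:
  assumes "x \<in># M"
  shows "f x \<subseteq># (\<Sum>y\<in>#M. f y)"
proof -
  have "{#x#} \<subseteq># M"
    using assms by simp
  then show ?thesis
    using sum_mset_image_mset_mono_strong[of "{#x#}" M f f] by simp
qed

lemma size_filter_mset_less:
  assumes "x \<in># M" "\<not> P x"
  shows "size (filter_mset P M) < size M"
proof -
  have "size M = size (filter_mset P M) + size (filter_mset (\<lambda>x. \<not> P x) M)"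
    by (metis multiset_partition size_union)
  moreover have "x \<in># filter_mset (\<lambda>x. \<not> P x) M"
    using assms by simp
  ultimately show ?thesis
    by (metis add_less_cancel_left add.right_neutral nonempty_has_size empty_iff set_mset_empty)
qed

lemma subseteq_image_mset_lift:
  assumes "N \<subseteq># image_mset f M"
  shows "\<exists>M'. M' \<subseteq># M \<and> image_mset f M' = N"
  using assms
proof (induction M arbitrary: N)
  case (add x M)
  have rest: "N - {#f x#} \<subseteq># image_mset f M"
    using add.prems by (simp add: subset_eq_diff_conv)
  show ?case
  proof (cases "f x \<in># N")
    case True
    obtain M' where "M' \<subseteq># M" "image_mset f M' = N - {#f x#}"
      using add.IH[OF rest] by blast
    then show ?thesis
      using True by (intro exI[of _ "add_mset x M'"]) auto
  next
    case False
    then obtain M' where "M' \<subseteq># M" "image_mset f M' = N"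
      using add.IH rest by (metis diff_single_trivial)
    moreover have "M \<subseteq># add_mset x M"
      by simp
    ultimately show ?thesis
      using subset_mset.order_trans by blast
  qed
qed simp

lemma card_set_mset_le: "card (set_mset M) \<le> size M"
  by (metis card_length ex_mset set_mset_mset size_mset)

lemma finite_bounded_msets:
  assumes "finite A"
  shows "finite {M. set_mset M \<subseteq> A \<and> size M \<le> k}"
proof -
  have "{M. set_mset M \<subseteq> A \<and> size M \<le> k} \<subseteq> mset ` {xs. set xs \<subseteq> A \<and> length xs \<le> k}"
    by (auto simp: image_iff) (metis ex_mset set_mset_mset size_mset)
  moreover have "finite {xs. set xs \<subseteq> A \<and> length xs \<le> k}"
    using assms by (rule finite_lists_length_le)
  ultimately show ?thesis
    by (meson finite_imageI finite_subset)
qed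

section \<open>Dickson's lemma for multisets over a finite set\<close>

lemma nat_seq_monotone_subseq:
  fixes s :: "nat \<Rightarrow> nat"
  obtains r :: "nat \<Rightarrow> nat" where "strict_mono r" "\<And>i j. i \<le> j \<Longrightarrow> s (r i) \<le> s (r j)"
proof -
  obtain f where f: "strict_mono f" "monoseq (\<lambda>n. s (f n))"
    using seq_monosub by blast
  show thesis
  proof (cases "\<forall>i j. i \<le> j \<longrightarrow> s (f i) \<le> s (f j)")
    case True
    then show thesis using that f(1) by blast
  next
    case False
    then have dec: "\<And>i j. i \<le> j \<Longrightarrow> s (f j) \<le> s (f i)"
      using f(2) unfolding monoseq_def by blast
    define n0 where "n0 = (ARG_MIN (\<lambda>k. s (f k)) k. True)"
    have n0: "s (f n0) \<le> s (f k)" for k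
      unfolding n0_def by (rule arg_min_nat_le) simp
    have "s (f (i + n0)) \<le> s (f (j + n0))" for i j
      using dec[of n0 "i + n0"] n0[of "j + n0"] by simp
    moreover have "strict_mono (\<lambda>i. f (i + n0))"
      using f(1) by (simp add: strict_mono_def)
    ultimately show thesis using that by blast
  qed
qed

lemma multiset_seq_monotone_subseq:
  assumes "finite A" "\<And>n. set_mset (f n) \<subseteq> A"
  obtains r :: "nat \<Rightarrow> nat" where "strict_mono r" "\<And>i j. i \<le> j \<Longrightarrow> f (r i) \<subseteq># f (r j)"
  using assms
proof (induction A arbitrary: f thesis rule: finite_induct)
  case empty
  then have "f n = {#}" for n by auto
  then show ?case using empty.prems(1)[of id] by (simp add: strict_mono_def)
next
  case (insert a A)
  obtain r1 :: "nat \<Rightarrow> nat" where r1: "strict_mono r1"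
    "\<And>i j. i \<le> j \<Longrightarrow> count (f (r1 i)) a \<le> count (f (r1 j)) a"
    using nat_seq_monotone_subseq[of "\<lambda>n. count (f n) a"] by blast
  define g where "g n = filter_mset (\<lambda>x. x \<noteq> a) (f (r1 n))" for n
  have "set_mset (g n) \<subseteq> A" for n
    using insert.prems(2)[of "r1 n"] by (auto simp: g_def)
  then obtain r2 :: "nat \<Rightarrow> nat" where r2: "strict_mono r2"
    "\<And>i j. i \<le> j \<Longrightarrow> g (r2 i) \<subseteq># g (r2 j)"
    using insert.IH by blast
  have "f (r1 (r2 i)) \<subseteq># f (r1 (r2 j))" if "i \<le> j" for i j
  proof (rule mset_subset_eqI)
    fix x
    have "r2 i \<le> r2 j"
      using r2(1) that by (simp add: strict_mono_less_eq)
    then show "count (f (r1 (r2 i))) x \<le> count (f (r1 (r2 j))) x"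
      using r1(2) r2(2)[OF that] mset_subset_eq_count[of "g (r2 i)" "g (r2 j)" x]
      by (cases "x = a") (auto simp: g_def)
  qed
  moreover have "strict_mono (\<lambda>i. r1 (r2 i))"
    using r1(1) r2(1) by (simp add: strict_mono_def)
  ultimately show ?case
    using insert.prems(1) by blast
qed

lemma finite_multiset_basis:
  assumes "finite A" "\<And>q. q \<in> Q \<Longrightarrow> set_mset (f q) \<subseteq> A"
  shows "\<exists>H. finite H \<and> H \<subseteq> Q \<and> (\<forall>q\<in>Q. \<exists>h\<in>H. f h \<subseteq># f q)"
proof -
  define M where "M = {h \<in> f ` Q. \<forall>q \<in> f ` Q. q \<subseteq># h \<longrightarrow> q = h}"
  have above_M: "\<exists>h\<in>M. h \<subseteq># q" if "q \<in> f ` Q" for q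
    using that
  proof (induction q rule: wfp_induct[OF wfp_subset_mset])
    case (1 q)
    show ?case
    proof (cases "q \<in> M")
      case False
      then obtain q' where q': "q' \<in> f ` Q" "q' \<subset># q"
        using "1.prems" unfolding M_def subset_mset.less_le by blast
      then obtain h where "h \<in> M" "h \<subseteq># q'"
        using "1.IH" by blast
      then show ?thesis
        using q'(2) subset_mset.less_imp_le subset_mset.order_trans by blast
    qed blast
  qed
  have "finite M"
  proof (rule ccontr)
    assume "infinite M"
    then obtain g :: "nat \<Rightarrow> _" where g: "inj g" "range g \<subseteq> M"
      using infinite_iff_countable_subset by metis
    have "range g \<subseteq> f ` Q"
      using g(2) unfolding M_def by blast
    have gA: "set_mset (g n) \<subseteq> A" for n
    proof -
      obtain q where "q \<in> Q" "g n = f q"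
        using \<open>range g \<subseteq> f ` Q\<close> by blast
      then show ?thesis
        using assms(2) by simp
    qed
    obtain r :: "nat \<Rightarrow> nat" where "strict_mono r" "\<And>i j. i \<le> j \<Longrightarrow> g (r i) \<subseteq># g (r j)"
      using multiset_seq_monotone_subseq[of A g, OF assms(1) gA] by blast
    then have r: "strict_mono r" "g (r 0) \<subseteq># g (r 1)"
      by simp_all
    have "g (r 0) \<in> f ` Q" "g (r 1) \<in> M"
      using g(2) \<open>range g \<subseteq> f ` Q\<close> by auto
    then have "g (r 0) = g (r 1)"
      using r(2) unfolding M_def by blast
    then show False
      using g(1) r(1) by (simp add: inj_eq strict_mono_eq)
  qed
  have "M \<subseteq> f ` Q"
    unfolding M_def by blast
  then obtain H where H: "H \<subseteq> Q" "inj_on f H" "M = f ` H"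
    by (meson subset_image_inj)
  have "finite H"
    using \<open>finite M\<close> H(2,3) by (simp add: finite_image_iff)
  moreover have "\<exists>h\<in>H. f h \<subseteq># f q" if "q \<in> Q" for q
    using above_M[of "f q"] that H(3) by blast
  ultimately show ?thesis
    using H(1) by blast
qed

definition mset_pair :: "'a multiset \<Rightarrow> 'b multiset \<Rightarrow> ('a + 'b) multiset" where
  "mset_pair X Y = image_mset Inl X + image_mset Inr Y"

lemma count_mset_pair [simp]:
  "count (mset_pair X Y) (Inl a) = count X a"
  "count (mset_pair X Y) (Inr b) = count Y b"
proof -
  show "count (mset_pair X Y) (Inl a) = count X a"
    unfolding mset_pair_def by (induction X) (auto simp: count_eq_zero_iff)
  show "count (mset_pair X Y) (Inr b) = count Y b"
    unfolding mset_pair_def by (induction Y) (auto simp: count_eq_zero_iff)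
qed

lemma set_mset_pair: "set_mset (mset_pair X Y) = Inl ` set_mset X \<union> Inr ` set_mset Y"
  by (simp add: mset_pair_def)

lemma mset_pair_subseteq_iff: "mset_pair X Y \<subseteq># mset_pair X' Y' \<longleftrightarrow> X \<subseteq># X' \<and> Y \<subseteq># Y'"
proof
  assume "mset_pair X Y \<subseteq># mset_pair X' Y'"
  then show "X \<subseteq># X' \<and> Y \<subseteq># Y'"
    unfolding subseteq_mset_def by (metis count_mset_pair)
next
  assume "X \<subseteq># X' \<and> Y \<subseteq># Y'"
  then show "mset_pair X Y \<subseteq># mset_pair X' Y'"
    unfolding mset_pair_def by (simp add: image_mset_subseteq_mono subset_mset.add_mono)
qed

lemma finite_pair_basis:
  assumes "finite B" "\<And>q. q \<in> Q \<Longrightarrow> set_mset (fst q) \<subseteq> B \<and> set_mset (snd q) \<subseteq> B"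
  shows "\<exists>H. finite H \<and> H \<subseteq> Q \<and> (\<forall>q\<in>Q. \<exists>h\<in>H. fst h \<subseteq># fst q \<and> snd h \<subseteq># snd q)"
proof -
  have fin: "finite (Inl ` B \<union> Inr ` B)"
    using assms(1) by simp
  have sets: "set_mset (mset_pair (fst q) (snd q)) \<subseteq> Inl ` B \<union> Inr ` B" if "q \<in> Q" for q
    using assms(2)[OF that] by (auto simp: set_mset_pair)
  show ?thesis
    using finite_multiset_basis[OF fin sets] by (simp add: mset_pair_subseteq_iff)
qed

definition vec_of_mset :: "'a multiset \<Rightarrow> 'a \<Rightarrow> int" where
  "vec_of_mset M = (\<lambda>i. int (count M i))"

definition mset_of_vec :: "('a \<Rightarrow> int) \<Rightarrow> 'a multiset" where
  "mset_of_vec u = Abs_multiset (\<lambda>i. nat (u i))"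

lemma vec_of_mset_inject: "vec_of_mset A = vec_of_mset B \<longleftrightarrow> A = B"
  unfolding vec_of_mset_def by (metis multiset_eqI of_nat_eq_iff)

lemma vec_of_mset_in_nonneg_vecs: "set_mset X \<subseteq> J \<Longrightarrow> vec_of_mset X \<in> nonneg_vecs J"
  unfolding nonneg_vecs_def fin_vecs_def vec_of_mset_def by auto

lemma support_vec_of_mset_diff:
  "{i. (vec_of_mset X - vec_of_mset Y) i \<noteq> 0} \<subseteq> set_mset X \<union> set_mset Y"
  unfolding vec_of_mset_def by (auto simp: count_eq_zero_iff[symmetric])

lemma vec_of_mset_diff_in_fin_vecs:
  "set_mset X \<subseteq> J \<Longrightarrow> set_mset Y \<subseteq> J \<Longrightarrow> vec_of_mset X - vec_of_mset Y \<in> fin_vecs J"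
  using support_vec_of_mset_diff[of X Y] unfolding fin_vecs_def
  by (auto intro: finite_subset)

lemma mset_of_vec_inverse:
  assumes "u \<in> nonneg_vecs J"
  shows "vec_of_mset (mset_of_vec u) = u" "set_mset (mset_of_vec u) \<subseteq> J"
proof -
  have "finite {i. 0 < nat (u i)}"
    using assms unfolding nonneg_vecs_def fin_vecs_def by (auto elim: finite_subset[rotated])
  then have count: "count (mset_of_vec u) = (\<lambda>i. nat (u i))"
    unfolding mset_of_vec_def by (simp add: Abs_multiset_inverse)
  show "vec_of_mset (mset_of_vec u) = u"
    using assms unfolding vec_of_mset_def count nonneg_vecs_def by auto
  show "set_mset (mset_of_vec u) \<subseteq> J"
    using assms unfolding set_mset_def count nonneg_vecs_def fin_vecs_def by auto
qed

text \<open>Both \<^const>\<open>mu_comp\<close> and \<^const>\<open>act_vec\<close> are push-forwards of this form.\<close>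

lemma pushforward_vec_of_mset_diff:
  "(\<lambda>y. \<Sum>i \<in> {i. (vec_of_mset X - vec_of_mset Y) i \<noteq> 0 \<and> f i = y}. (vec_of_mset X - vec_of_mset Y) i)
     = vec_of_mset (image_mset f X) - vec_of_mset (image_mset f Y)"
proof
  fix y
  define d where "d = vec_of_mset X - vec_of_mset Y"
  define S where "S = (set_mset X \<union> set_mset Y) \<inter> f -` {y}"
  have "finite S"
    unfolding S_def by simp
  have count_image: "int (count (image_mset f M) y) = (\<Sum>i\<in>S. int (count M i))"
    if "set_mset M \<subseteq> set_mset X \<union> set_mset Y" for M
  proof -
    have "count (image_mset f M) y = (\<Sum>i\<in>f -` {y} \<inter> set_mset M. count M i)"
      by (rule count_image_mset)
    also have "\<dots> = (\<Sum>i\<in>S. count M i)"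
      using \<open>finite S\<close> that by (intro sum.mono_neutral_left) (auto simp: S_def count_eq_zero_iff)
    finally show ?thesis
      by simp
  qed
  have "(\<Sum>i \<in> {i. d i \<noteq> 0 \<and> f i = y}. d i) = (\<Sum>i\<in>S. d i)"
    using \<open>finite S\<close> support_vec_of_mset_diff[of X Y]
    by (intro sum.mono_neutral_left) (auto simp: S_def d_def)
  also have "\<dots> = int (count (image_mset f X) y) - int (count (image_mset f Y) y)"
    by (simp add: d_def vec_of_mset_def sum_subtractf count_image)
  finally show "(\<Sum>i \<in> {i. d i \<noteq> 0 \<and> f i = y}. d i)
      = (vec_of_mset (image_mset f X) - vec_of_mset (image_mset f Y)) y"
    by (simp add: vec_of_mset_def)
qed

lemma mu_comp_vec_of_mset_diff:
  "mu_comp F (vec_of_mset X - vec_of_mset Y)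
     = vec_of_mset (image_mset (restr F) X) - vec_of_mset (image_mset (restr F) Y)"
  unfolding mu_comp_def by (rule pushforward_vec_of_mset_diff)

lemma act_vec_vec_of_mset_diff:
  "act_vec T \<sigma> (vec_of_mset X - vec_of_mset Y)
     = vec_of_mset (image_mset (act_idx T \<sigma>) X) - vec_of_mset (image_mset (act_idx T \<sigma>) Y)"
  unfolding act_vec_def by (rule pushforward_vec_of_mset_diff)

lemma Sym_inv: "\<sigma> \<in> Sym \<Longrightarrow> inv \<sigma> \<in> Sym"
proof -
  assume "\<sigma> \<in> Sym"
  then have \<sigma>: "bij \<sigma>" "\<sigma> 0 = 0" "finite {n. \<sigma> n \<noteq> n}"
    unfolding Sym_def by auto
  have "inv \<sigma> 0 = 0"
    using \<sigma>(1,2) by (metis bij_inv_eq_iff)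
  moreover have "{n. inv \<sigma> n \<noteq> n} \<subseteq> \<sigma> ` {n. \<sigma> n \<noteq> n}"
  proof
    fix n
    assume "n \<in> {n. inv \<sigma> n \<noteq> n}"
    moreover have "\<sigma> (inv \<sigma> n) = n"
      using \<sigma>(1) by (simp add: bij_is_surj surj_f_inv_f)
    ultimately show "n \<in> \<sigma> ` {n. \<sigma> n \<noteq> n}"
      by (metis (mono_tags) image_eqI mem_Collect_eq)
  qed
  then have "finite {n. inv \<sigma> n \<noteq> n}"
    using \<sigma>(3) by (rule finite_subset[OF _ finite_imageI])
  ultimately show ?thesis
    using \<sigma>(1) unfolding Sym_def by (simp add: bij_imp_bij_inv)
qed

lemma Sym_nonzero:
  assumes "\<sigma> \<in> Sym" "n \<noteq> 0"
  shows "\<sigma> n \<noteq> 0"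
proof -
  have "inj \<sigma>" "\<sigma> 0 = 0"
    using assms(1) unfolding Sym_def by (auto simp: bij_is_inj)
  then show ?thesis
    using assms(2) by (metis injD)
qed

lemma act_idx_inv: "bij \<sigma> \<Longrightarrow> act_idx T (inv \<sigma>) (act_idx T \<sigma> i) = i"
  unfolding act_idx_def by (auto simp: fun_eq_iff bij_is_inj inv_f_f)

lemma restr_act_idx: "\<sigma> 0 = 0 \<Longrightarrow> restr F (act_idx T \<sigma> i) = act_idx T \<sigma> (restr F i)"
  unfolding restr_def act_idx_def by auto

text \<open>The permutation exchanges the labels of \<open>L\<close> above \<open>N\<close> with unused labels in
  \<open>{1..N}\<close>.\<close>

lemma Sym_relabel_into_interval:
  assumes "finite L" "0 \<notin> L" "card L \<le> N"
  shows "\<exists>\<tau>\<in>Sym. \<tau> ` L \<subseteq> {1..N}"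
proof -
  define Out where "Out = L - {1..N}"
  define Free where "Free = {1..N} - L"
  have "card L = card (L \<inter> {1..N}) + card Out"
    unfolding Out_def using assms(1) by (rule card_Int_Diff)
  moreover have "card Free = N - card (L \<inter> {1..N})"
    unfolding Free_def by (simp add: card_Diff_subset_Int Int_commute)
  ultimately have "card Out \<le> card Free"
    using assms(3) by linarith
  then obtain f where f: "f ` Out \<subseteq> Free" "inj_on f Out"
    using card_le_inj[of Out Free] assms(1) by (auto simp: Out_def Free_def)
  have disjoint: "Out \<inter> Free = {}"
    unfolding Out_def Free_def by auto
  define \<tau> where "\<tau> n = (if n \<in> Out then f n else if n \<in> f ` Out then inv_into Out f n else n)" for n
  have "\<tau> (\<tau> n) = n" for n
    using f disjoint by (auto simp: \<tau>_def inv_into_into f_inv_into_f)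
  then have "bij \<tau>"
    by (rule involuntory_imp_bij)
  moreover have "\<tau> 0 = 0"
    using assms(2) f(1) by (auto simp: \<tau>_def Out_def Free_def)
  moreover have "finite {n. \<tau> n \<noteq> n}"
    by (rule finite_subset[of _ "Out \<union> f ` Out"]) (auto simp: \<tau>_def Out_def assms(1))
  moreover have "\<tau> n \<in> {1..N}" if "n \<in> L" for n
  proof (cases "n \<in> Out")
    case True
    then show ?thesis
      using f(1) by (auto simp: \<tau>_def Free_def)
  next
    case False
    then have "n \<in> {1..N}" "n \<notin> f ` Out"
      using that f(1) by (auto simp: Out_def Free_def)
    then show ?thesis
      using False by (simp add: \<tau>_def)
  qed
  ultimately show ?thesis
    unfolding Sym_def by blast
qed

definition moves :: "('a multiset \<times> 'a multiset) set \<Rightarrow> 'a multiset \<Rightarrow> 'a multiset \<Rightarrow> bool" where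
  "moves M U V \<longleftrightarrow> (\<exists>X Y Z. (X, Y) \<in> M \<and> U = X + Z \<and> V = Y + Z)"

lemma moves_add_right:
  assumes "(moves M)\<^sup>*\<^sup>* U V"
  shows "(moves M)\<^sup>*\<^sup>* (U + W) (V + W)"
  using assms
proof (induction rule: rtranclp_induct)
  case (step V V')
  then have "moves M (V + W) (V' + W)"
    unfolding moves_def by (metis add.assoc)
  then show ?case
    using step.IH by simp
qed simp

lemma moves_mono:
  assumes "M \<subseteq> M'" "(moves M)\<^sup>*\<^sup>* U V"
  shows "(moves M')\<^sup>*\<^sup>* U V"
proof -
  have "moves M \<le> moves M'"
    using assms(1) unfolding moves_def by blast
  then show ?thesis
    using assms(2) by (metis rtranclp_mono predicate2D)
qed

lemma moves_preserve_image:
  assumes "(moves M)\<^sup>*\<^sup>* U V" "\<And>X Y. (X, Y) \<in> M \<Longrightarrow> image_mset f X = image_mset f Y"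
  shows "image_mset f U = image_mset f V"
  using assms(1) by induction (auto simp: moves_def dest: assms(2))

lemma moves_preserve_set:
  assumes "(moves M)\<^sup>*\<^sup>* U V" "set_mset U \<subseteq> J" "\<And>X Y. (X, Y) \<in> M \<Longrightarrow> set_mset Y \<subseteq> J"
  shows "set_mset V \<subseteq> J"
  using assms(1,2)
proof induction
  case (step V V')
  then obtain X Y Z where "(X, Y) \<in> M" "V = X + Z" "V' = Y + Z"
    unfolding moves_def by blast
  then show ?case
    using step assms(3) by auto
qed

definition slice :: "'l \<Rightarrow> ('l \<times> 'b) multiset \<Rightarrow> 'b multiset" where
  "slice a P = image_mset snd (filter_mset (\<lambda>p. fst p = a) P)"

lemma image_Pair_slice: "image_mset (Pair a) (slice a P) = filter_mset (\<lambda>p. fst p = a) P"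
  unfolding slice_def by (induction P) auto

lemma slice_image_Pair: "slice b (image_mset (Pair a) X) = (if a = b then X else {#})"
  unfolding slice_def by (induction X) auto

lemma slice_empty [simp]: "slice a {#} = {#}"
  unfolding slice_def by simp

lemma slice_plus [simp]: "slice a (P + Q) = slice a P + slice a Q"
  unfolding slice_def by simp

lemma slice_filter_other:
  "slice b (filter_mset (\<lambda>p. fst p \<noteq> a) P) = (if b = a then {#} else slice b P)"
  unfolding slice_def filter_filter_mset
  by (cases "b = a") (auto intro!: arg_cong[of _ _ "image_mset snd"] filter_mset_cong)

definition spread :: "('b multiset \<times> 'b multiset \<Rightarrow> 'b multiset) \<Rightarrow>
    ('l \<times> 'b multiset \<times> 'b multiset) multiset \<Rightarrow> ('l \<times> 'b) multiset" where
  "spread sel D = (\<Sum>d\<in>#D. image_mset (Pair (fst d)) (sel (snd d)))"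

lemma spread_empty [simp]: "spread sel {#} = {#}"
  unfolding spread_def by simp

lemma spread_plus [simp]: "spread sel (D + D') = spread sel D + spread sel D'"
  unfolding spread_def by simp

lemma spread_image_Pair: "spread sel (image_mset (Pair a) G) = image_mset (Pair a) (\<Sum>g\<in>#G. sel g)"
  unfolding spread_def by (induction G) auto

lemma slice_spread: "slice a (spread sel D) = (\<Sum>d\<in>#filter_mset (\<lambda>d. fst d = a) D. sel (snd d))"
  unfolding spread_def by (induction D) (auto simp: slice_image_Pair)

lemma image_snd_spread: "image_mset snd (spread sel D) = (\<Sum>d\<in>#D. sel (snd d))"
  unfolding spread_def by (induction D) (auto simp: image_mset.compositionality o_def)

lemma sum_image_snd_spread: "(\<Sum>g\<in>#image_mset snd D. sel g) = image_mset snd (spread sel D)"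
  by (simp add: image_snd_spread image_mset.compositionality o_def)

lemma spread_mono: "D' \<subseteq># D \<Longrightarrow> spread sel D' \<subseteq># spread sel D"
  unfolding spread_def by (rule sum_mset_image_mset_mono_strong) simp_all

definition part :: "'t \<Rightarrow> ('t \<times> 'c) multiset \<Rightarrow> 'c multiset" where
  "part t M = image_mset snd (filter_mset (\<lambda>x. fst x = t) M)"

lemma part_mono: "M' \<subseteq># M \<Longrightarrow> part t M' \<subseteq># part t M"
  unfolding part_def by (intro image_mset_subseteq_mono multiset_filter_mono)

lemma part_image_map_prod: "part t (image_mset (map_prod id f) M) = image_mset f (part t M)"
  unfolding part_def by (induction M) auto

lemma part_sum_Pair:
  assumes "finite S" "t \<in> S"
  shows "part t (\<Sum>s\<in>S. image_mset (Pair s) (D s)) = D t"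
proof -
  have "part t (\<Sum>s\<in>S. image_mset (Pair s) (D s)) = (\<Sum>s\<in>S. if s = t then D s else {#})"
    using assms(1) unfolding part_def
    by (induction S rule: finite_induct) (auto simp: image_mset.compositionality o_def filter_mset_image_mset)
  then show ?thesis
    using assms by (simp add: sum.delta')
qed

section \<open>The hierarchical model with an independent set of unbounded coordinates\<close>

locale independent_set_model =
  fixes m :: nat and Fs :: "nat set list" and T :: "nat set" and r :: "nat \<Rightarrow> nat"
  assumes T_sub: "T \<subseteq> {1..m}"
    and T_indep: "\<forall>k < length Fs. card (T \<inter> Fs ! k) \<le> 1"
begin

abbreviation J :: "(nat \<Rightarrow> nat) set" where
  "J \<equiv> idx_set m T r"

definition shape :: "(nat \<Rightarrow> nat) \<Rightarrow> nat \<Rightarrow> nat" where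
  "shape i = (\<lambda>j. if j \<in> T then 0 else i j)"

definition tag :: "nat \<Rightarrow> (nat \<Rightarrow> nat) \<Rightarrow> nat \<times> (nat \<Rightarrow> nat)" where
  "tag t i = (i t, shape i)"

definition same_margins :: "(nat \<Rightarrow> nat) multiset \<Rightarrow> (nat \<Rightarrow> nat) multiset \<Rightarrow> bool" where
  "same_margins U V \<longleftrightarrow>
     (\<forall>k < length Fs. image_mset (restr (Fs ! k)) U = image_mset (restr (Fs ! k)) V)"

definition same_tags :: "(nat \<Rightarrow> nat) multiset \<Rightarrow> (nat \<Rightarrow> nat) multiset \<Rightarrow> bool" where
  "same_tags U V \<longleftrightarrow> image_mset shape U = image_mset shape V \<and>
     (\<forall>t\<in>T. image_mset (tag t) U = image_mset (tag t) V)"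

lemma finite_T: "finite T"
  using T_sub finite_subset by blast

lemma label_pos: "i \<in> J \<Longrightarrow> t \<in> T \<Longrightarrow> 1 \<le> i t"
  using T_sub unfolding idx_set_def by auto

lemma relabel_in_J: "i \<in> J \<Longrightarrow> j \<in> J \<Longrightarrow> t \<in> T \<Longrightarrow> i(t := j t) \<in> J"
  using T_sub unfolding idx_set_def by auto

lemma shape_relabel [simp]: "t \<in> T \<Longrightarrow> shape (i(t := a)) = shape i"
  unfolding shape_def by auto

lemma snd_image_tag: "image_mset snd (image_mset (tag t) W) = image_mset shape W"
  by (simp add: image_mset.compositionality o_def tag_def)

lemma index_eqI:
  assumes "shape x = shape y" "\<And>t. t \<in> T \<Longrightarrow> x t = y t"
  shows "x = y"
proof
  fix j
  show "x j = y j"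
    using fun_cong[OF assms(1), of j] assms(2)[of j] by (cases "j \<in> T") (simp_all add: shape_def)
qed

lemma index_bounded:
  assumes "i \<in> J"
  shows "j \<notin> {1..m} \<Longrightarrow> i j = 0" "j \<in> {1..m} \<Longrightarrow> j \<notin> T \<Longrightarrow> i j \<le> Max (r ` {1..m})"
proof -
  show "j \<notin> {1..m} \<Longrightarrow> i j = 0"
    using assms T_sub unfolding idx_set_def by auto
  assume "j \<in> {1..m}" "j \<notin> T"
  then have "i j \<le> r j"
    using assms unfolding idx_set_def by auto
  also have "r j \<le> Max (r ` {1..m})"
    using \<open>j \<in> {1..m}\<close> by (intro Max_ge) auto
  finally show "i j \<le> Max (r ` {1..m})" .
qed

lemma finite_bounded_tuples: "finite {i :: nat \<Rightarrow> nat. (\<forall>j. j \<notin> {1..m} \<longrightarrow> i j = 0) \<and> (\<forall>j\<in>{1..m}. i j \<le> b)}"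
proof -
  have "finite {i. \<forall>j. (j \<in> {1..m} \<longrightarrow> i j \<in> {0..b}) \<and> (j \<notin> {1..m} \<longrightarrow> i j = (0::nat))}"
    by (rule finite_set_of_finite_funs) auto
  then show ?thesis
    by (rule rev_finite_subset) auto
qed

lemma finite_shapes: "finite (shape ` J)"
proof (rule finite_subset[OF _ finite_bounded_tuples])
  show "shape ` J \<subseteq> {i. (\<forall>j. j \<notin> {1..m} \<longrightarrow> i j = 0) \<and> (\<forall>j\<in>{1..m}. i j \<le> Max (r ` {1..m}))}"
    using index_bounded unfolding shape_def by auto
qed

lemma facet_meets_T:
  assumes "k < length Fs"
  shows "Fs ! k \<inter> T = {} \<or> (\<exists>t\<in>T. Fs ! k \<inter> T = {t})"
proof -
  have "card (T \<inter> Fs ! k) \<le> 1"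
    using T_indep assms by simp
  then have "T \<inter> Fs ! k = {} \<or> (\<exists>t. T \<inter> Fs ! k = {t})"
    using finite_T by (metis card_0_eq card_1_singletonE finite_Int le_SucE le_zero_eq One_nat_def)
  then show ?thesis
    by auto
qed

lemma restr_shape:
  assumes "F \<inter> T = {}"
  shows "restr F (shape i) = restr F i"
proof -
  have "\<And>j. j \<in> F \<Longrightarrow> j \<notin> T"
    using assms by blast
  then show ?thesis
    unfolding restr_def shape_def by (auto simp: fun_eq_iff)
qed

lemma restr_tag:
  assumes "F \<inter> T = {t}"
  shows "restr F i = (restr F (shape i))(t := i t)"
proof -
  have "t \<in> F" "\<And>j. j \<in> F \<Longrightarrow> j \<noteq> t \<Longrightarrow> j \<notin> T"
    using assms by blast+
  then show ?thesis
    unfolding restr_def shape_def by (auto simp: fun_eq_iff)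
qed

lemma same_tags_imp_same_margins:
  assumes "same_tags U V"
  shows "same_margins U V"
  unfolding same_margins_def
proof (intro allI impI)
  fix k
  assume k: "k < length Fs"
  let ?F = "Fs ! k"
  from facet_meets_T[OF k] show "image_mset (restr ?F) U = image_mset (restr ?F) V"
  proof
    assume "?F \<inter> T = {}"
    then have "image_mset (restr ?F) W = image_mset (restr ?F) (image_mset shape W)" for W
      by (simp add: image_mset.compositionality o_def restr_shape)
    then show ?thesis
      using assms unfolding same_tags_def by metis
  next
    assume "\<exists>t\<in>T. ?F \<inter> T = {t}"
    then obtain t where t: "t \<in> T" "?F \<inter> T = {t}"
      by blast
    define h where "h p = (restr ?F (snd p))(t := fst p)" for p :: "nat \<times> (nat \<Rightarrow> nat)"
    have "image_mset (restr ?F) W = image_mset h (image_mset (tag t) W)" for W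
      by (simp add: image_mset.compositionality o_def h_def tag_def restr_tag[OF t(2), symmetric])
    then show ?thesis
      using assms t(1) unfolding same_tags_def by metis
  qed
qed

definition swap_pairs :: "((nat \<Rightarrow> nat) multiset \<times> (nat \<Rightarrow> nat) multiset) set" where
  "swap_pairs = {({#y, z#}, {#y(t := z t), z(t := y t)#}) | y z t.
     t \<in> T \<and> shape y = shape z \<and> y \<in> J \<and> z \<in> J}"

lemma swap_pairsI:
  "t \<in> T \<Longrightarrow> shape y = shape z \<Longrightarrow> y \<in> J \<Longrightarrow> z \<in> J \<Longrightarrow>
    ({#y, z#}, {#y(t := z t), z(t := y t)#}) \<in> swap_pairs"
  unfolding swap_pairs_def by blast

lemma swap_pairs_in_J: "(X, Y) \<in> swap_pairs \<Longrightarrow> set_mset X \<subseteq> J \<and> set_mset Y \<subseteq> J"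
  unfolding swap_pairs_def by (auto intro: relabel_in_J)

lemma swap_pairs_same_tags: "(X, Y) \<in> swap_pairs \<Longrightarrow> same_tags X Y"
  unfolding swap_pairs_def same_tags_def tag_def by (auto simp: add_mset_commute)

lemma swap_path_same_tags:
  assumes "(moves swap_pairs)\<^sup>*\<^sup>* U V"
  shows "same_tags U V"
proof -
  have "image_mset shape U = image_mset shape V"
    by (rule moves_preserve_image[OF assms]) (simp add: swap_pairs_same_tags[unfolded same_tags_def])
  moreover have "image_mset (tag t) U = image_mset (tag t) V" if "t \<in> T" for t
    by (rule moves_preserve_image[OF assms]) (use that swap_pairs_same_tags in \<open>simp add: same_tags_def\<close>)
  ultimately show ?thesis
    unfolding same_tags_def by blast
qed

lemma swap_path_in_J: "(moves swap_pairs)\<^sup>*\<^sup>* U V \<Longrightarrow> set_mset U \<subseteq> J \<Longrightarrow> set_mset V \<subseteq> J"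
  by (rule moves_preserve_set[where M = swap_pairs]) (auto dest: swap_pairs_in_J)

text \<open>Moving one index \<open>x\<close> of \<open>V\<close> into \<open>U\<close>: an index \<open>y\<close> of \<open>U\<close> of the same shape has its
  labels corrected one coordinate at a time, by exchanging the label at \<open>t\<close> with an index
  of \<open>U\<close> that carries the tag \<open>tag t x\<close>.\<close>

lemma swap_path_to_element:
  assumes "same_tags U V" "set_mset U \<subseteq> J" "x \<in># V" "y \<in># U" "shape y = shape x"
  shows "\<exists>U'. (moves swap_pairs)\<^sup>*\<^sup>* U U' \<and> x \<in># U'"
  using assms
proof (induction "card {t\<in>T. y t \<noteq> x t}" arbitrary: U y rule: less_induct)
  case less
  show ?case
  proof (cases "{t\<in>T. y t \<noteq> x t} = {}")
    case True
    then have "y = x"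
      using index_eqI[OF less.prems(5)] by blast
    then show ?thesis
      using less.prems(4) by blast
  next
    case False
    then obtain t where t: "t \<in> T" "y t \<noteq> x t"
      by blast
    have "tag t x \<in># image_mset (tag t) U"
      using less.prems(1,3) t(1) unfolding same_tags_def by (metis image_eqI set_image_mset)
    then obtain z where z: "z \<in># U" "z t = x t" "shape z = shape x"
      unfolding tag_def by auto
    then have "z \<noteq> y"
      using t(2) by auto
    then have "{#y, z#} \<subseteq># U"
      using less.prems(4) z(1) by (simp add: insert_subset_eq_iff in_diff_count)
    then obtain Z where U: "U = {#y, z#} + Z"
      by (metis subset_mset.le_iff_add)
    define U1 where "U1 = {#y(t := z t), z(t := y t)#} + Z"
    have "y \<in> J" "z \<in> J"
      using less.prems(2,4) z(1) by auto
    then have "({#y, z#}, {#y(t := z t), z(t := y t)#}) \<in> swap_pairs"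
      using t(1) z(3) less.prems(5) by (intro swap_pairsI) simp_all
    then have step: "moves swap_pairs U U1"
      unfolding moves_def U1_def U by blast
    then have "same_tags U1 V" "set_mset U1 \<subseteq> J"
      using less.prems(1,2) swap_path_same_tags swap_path_in_J
      unfolding same_tags_def by (metis r_into_rtranclp)+
    moreover have "{s\<in>T. (y(t := z t)) s \<noteq> x s} \<subset> {s\<in>T. y s \<noteq> x s}"
      using t z(2) by auto
    then have "card {s\<in>T. (y(t := z t)) s \<noteq> x s} < card {s\<in>T. y s \<noteq> x s}"
      using finite_T by (intro psubset_card_mono) auto
    moreover have "y(t := z t) \<in># U1" "shape (y(t := z t)) = shape x"
      using t(1) less.prems(5) by (simp_all add: U1_def)
    ultimately obtain U' where "(moves swap_pairs)\<^sup>*\<^sup>* U1 U'" "x \<in># U'"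
      using less.hyps less.prems(3) by blast
    then show ?thesis
      using step by (meson converse_rtranclp_into_rtranclp)
  qed
qed

lemma same_tags_imp_swap_path:
  assumes "same_tags U V" "set_mset U \<subseteq> J" "set_mset V \<subseteq> J"
  shows "(moves swap_pairs)\<^sup>*\<^sup>* U V"
  using assms
proof (induction "size U" arbitrary: U V rule: less_induct)
  case less
  show ?case
  proof (cases "V = {#}")
    case True
    then show ?thesis
      using less.prems(1) unfolding same_tags_def by simp
  next
    case False
    then obtain x where x: "x \<in># V"
      by (meson multiset_nonemptyE)
    have "shape x \<in># image_mset shape U"
      using less.prems(1) x unfolding same_tags_def by (metis image_eqI set_image_mset)
    then obtain y where "y \<in># U" "shape y = shape x"
      by auto
    then obtain U' where path: "(moves swap_pairs)\<^sup>*\<^sup>* U U'" and "x \<in># U'"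
      using swap_path_to_element less.prems(1,2) x by blast
    define U0 where "U0 = U' - {#x#}"
    define V0 where "V0 = V - {#x#}"
    have U': "U' = U0 + {#x#}" and V: "V = V0 + {#x#}"
      using \<open>x \<in># U'\<close> x by (simp_all add: U0_def V0_def)
    have "same_tags U U'" "set_mset U' \<subseteq> J"
      using path less.prems(2) swap_path_same_tags swap_path_in_J by blast+
    then have "same_tags U0 V0" "set_mset U0 \<subseteq> J" "set_mset V0 \<subseteq> J"
      using less.prems(1,3) unfolding same_tags_def U' V by auto
    moreover have "size U0 < size U"
      using \<open>same_tags U U'\<close> unfolding same_tags_def U' by (metis size_image_mset size_union
          size_single less_add_one)
    ultimately have "(moves swap_pairs)\<^sup>*\<^sup>* (U0 + {#x#}) (V0 + {#x#})"
      using less.hyps by (blast intro: moves_add_right)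
    then show ?thesis
      using path unfolding U' V by simp
  qed
qed

definition slice_pairs :: "nat \<Rightarrow> ((nat \<Rightarrow> nat) multiset \<times> (nat \<Rightarrow> nat) multiset) set" where
  "slice_pairs t = {(A, B). set_mset A \<subseteq> shape ` J \<and> set_mset B \<subseteq> shape ` J \<and>
     (\<forall>k < length Fs. t \<in> Fs ! k \<longrightarrow> image_mset (restr (Fs ! k)) A = image_mset (restr (Fs ! k)) B)}"

definition untagged_pairs :: "((nat \<Rightarrow> nat) multiset \<times> (nat \<Rightarrow> nat) multiset) set" where
  "untagged_pairs = {(A, B). set_mset A \<subseteq> shape ` J \<and> set_mset B \<subseteq> shape ` J \<and>
     (\<forall>k < length Fs. Fs ! k \<inter> T = {} \<longrightarrow> image_mset (restr (Fs ! k)) A = image_mset (restr (Fs ! k)) B)}"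

lemma slice_tags: "slice a (image_mset (tag t) U) = image_mset shape (filter_mset (\<lambda>i. i t = a) U)"
  unfolding slice_def tag_def by (simp add: filter_mset_image_mset image_mset.compositionality o_def)

lemma facet_label_part:
  assumes "F \<inter> T = {t}"
  shows "filter_mset (\<lambda>g. g t = a) (image_mset (restr F) U)
    = image_mset (\<lambda>g. g(t := a)) (image_mset (restr F) (slice a (image_mset (tag t) U)))"
proof -
  have "t \<in> F"
    using assms by blast
  have "image_mset (\<lambda>g. g(t := a)) (image_mset (restr F) (slice a (image_mset (tag t) U)))
      = image_mset (\<lambda>i. (restr F (shape i))(t := i t)) (filter_mset (\<lambda>i. i t = a) U)"
    by (auto simp: slice_tags image_mset.compositionality o_def intro!: image_mset_cong)
  also have "\<dots> = image_mset (restr F) (filter_mset (\<lambda>i. i t = a) U)"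
    by (simp add: restr_tag[OF assms, symmetric])
  also have "\<dots> = filter_mset (\<lambda>g. g t = a) (image_mset (restr F) U)"
    using \<open>t \<in> F\<close> by (simp add: filter_mset_image_mset restr_def)
  finally show ?thesis ..
qed

lemma restr_slice_tags:
  assumes "F \<inter> T = {t}"
  shows "image_mset (restr F) (slice a (image_mset (tag t) U))
    = image_mset (\<lambda>g. g(t := 0)) (filter_mset (\<lambda>g. g t = a) (image_mset (restr F) U))"
proof -
  have "t \<in> T"
    using assms by blast
  have "(restr F (shape i))(t := 0) = restr F (shape i)" for i
    using \<open>t \<in> T\<close> by (intro fun_upd_idem) (simp add: restr_def shape_def)
  then show ?thesis
    unfolding facet_label_part[OF assms] slice_tags by (simp add: image_mset.compositionality o_def)
qed

lemma facet_margin_from_slices: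
  assumes "F \<inter> T = {t}"
    and "\<And>a. image_mset (restr F) (slice a (image_mset (tag t) U))
      = image_mset (restr F) (slice a (image_mset (tag t) V))"
  shows "image_mset (restr F) U = image_mset (restr F) V"
proof (rule multiset_eqI)
  fix g
  have "count (image_mset (restr F) U) g = count (filter_mset (\<lambda>g'. g' t = g t) (image_mset (restr F) U)) g"
    by simp
  also have "\<dots> = count (filter_mset (\<lambda>g'. g' t = g t) (image_mset (restr F) V)) g"
    unfolding facet_label_part[OF assms(1)] assms(2) ..
  also have "\<dots> = count (image_mset (restr F) V) g"
    by simp
  finally show "count (image_mset (restr F) U) g = count (image_mset (restr F) V) g" .
qed

lemma same_margins_iff_slices:
  assumes "set_mset U \<subseteq> J" "set_mset V \<subseteq> J"
  shows "same_margins U V \<longleftrightarrow> (image_mset shape U, image_mset shape V) \<in> untagged_pairs \<and>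
    (\<forall>t\<in>T. \<forall>a. (slice a (image_mset (tag t) U), slice a (image_mset (tag t) V)) \<in> slice_pairs t)"
    (is "_ \<longleftrightarrow> ?untagged \<and> ?slices")
proof -
  have shapes: "set_mset (image_mset shape U) \<subseteq> shape ` J" "set_mset (image_mset shape V) \<subseteq> shape ` J"
    "set_mset (slice a (image_mset (tag t) U)) \<subseteq> shape ` J"
    "set_mset (slice a (image_mset (tag t) V)) \<subseteq> shape ` J" for a t
    using assms by (auto simp: slice_tags)
  have untagged_facet: "image_mset (restr F) (image_mset shape W) = image_mset (restr F) W"
    if "F \<inter> T = {}" for F W
    using restr_shape[OF that] by (simp add: image_mset.compositionality o_def)
  have tagged_facet: "F \<inter> T = {t}" if "k < length Fs" "t \<in> T" "t \<in> Fs ! k" "F = Fs ! k" for k t F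
    using facet_meets_T[OF that(1)] that(2-4) by (metis IntI empty_iff singletonD)
  show ?thesis
  proof
    assume margins: "same_margins U V"
    have ?untagged
      using margins shapes unfolding untagged_pairs_def same_margins_def by (simp add: untagged_facet)
    moreover have ?slices
      using margins shapes unfolding slice_pairs_def same_margins_def
      by (auto simp: restr_slice_tags[OF tagged_facet])
    ultimately show "?untagged \<and> ?slices" ..
  next
    assume slices: "?untagged \<and> ?slices"
    show "same_margins U V"
      unfolding same_margins_def
    proof (intro allI impI)
      fix k
      assume k: "k < length Fs"
      from facet_meets_T[OF k] show "image_mset (restr (Fs ! k)) U = image_mset (restr (Fs ! k)) V"
      proof
        assume "Fs ! k \<inter> T = {}"
        then show ?thesis
          using slices k unfolding untagged_pairs_def by (simp add: untagged_facet)
      next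
        assume "\<exists>t\<in>T. Fs ! k \<inter> T = {t}"
        then obtain t where t: "t \<in> T" "Fs ! k \<inter> T = {t}"
          by blast
        then have "t \<in> Fs ! k"
          by blast
        then have "image_mset (restr (Fs ! k)) (slice a (image_mset (tag t) U))
            = image_mset (restr (Fs ! k)) (slice a (image_mset (tag t) V))" for a
          using slices t(1) k unfolding slice_pairs_def by blast
        then show ?thesis
          by (rule facet_margin_from_slices[OF t(2)])
      qed
    qed
  qed
qed

lemma exists_mset_with_tags:
  assumes "set_mset S \<subseteq> shape ` J" "\<And>t. t \<in> T \<Longrightarrow> image_mset snd (P t) = S"
    "\<And>t p. t \<in> T \<Longrightarrow> p \<in># P t \<Longrightarrow> 1 \<le> fst p"
  shows "\<exists>X. set_mset X \<subseteq> J \<and> image_mset shape X = S \<and> (\<forall>t\<in>T. image_mset (tag t) X = P t)"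
  using assms
proof (induction S arbitrary: P)
  case empty
  then show ?case
    by (intro exI[of _ "{#}"]) simp
next
  case (add c S)
  have "\<exists>a. (a, c) \<in># P t" if "t \<in> T" for t
  proof -
    have "c \<in># image_mset snd (P t)"
      using add.prems(2)[OF that] by simp
    then show ?thesis
      by force
  qed
  then obtain l where l: "\<And>t. t \<in> T \<Longrightarrow> (l t, c) \<in># P t"
    by metis
  define P' where "P' t = P t - {#(l t, c)#}" for t
  have "image_mset snd (P' t) = S" if "t \<in> T" for t
    using add.prems(2)[OF that] l[OF that] by (simp add: P'_def image_mset_Diff)
  moreover have "1 \<le> fst p" if "t \<in> T" "p \<in># P' t" for t p
    using add.prems(3)[of t p] that by (simp add: P'_def) (meson in_diffD)
  moreover have "set_mset S \<subseteq> shape ` J"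
    using add.prems(1) by simp
  ultimately obtain X where X: "set_mset X \<subseteq> J" "image_mset shape X = S"
    "\<forall>t\<in>T. image_mset (tag t) X = P' t"
    using add.IH[of P'] by blast
  obtain i where i: "i \<in> J" "shape i = c"
    using add.prems(1) by auto
  define x where "x j = (if j \<in> T then l j else i j)" for j
  have "shape x = c"
    using i(2) unfolding shape_def x_def by auto
  moreover have "x \<in> J"
    using i(1) T_sub add.prems(3) l unfolding idx_set_def x_def by fastforce
  moreover have "tag t x = (l t, c)" if "t \<in> T" for t
    using that \<open>shape x = c\<close> by (simp add: tag_def x_def)
  ultimately show ?case
    using X l by (intro exI[of _ "add_mset x X"]) (simp add: P'_def)
qed

lemma split_off_tags:
  assumes "set_mset U \<subseteq> J" "\<sigma> \<subseteq># image_mset shape U"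
    "\<And>t. t \<in> T \<Longrightarrow> \<alpha> t \<subseteq># image_mset (tag t) U" "\<And>t. t \<in> T \<Longrightarrow> image_mset snd (\<alpha> t) = \<sigma>"
  shows "\<exists>X U0. set_mset (X + U0) \<subseteq> J \<and> same_tags U (X + U0) \<and>
    image_mset shape X = \<sigma> \<and> (\<forall>t\<in>T. image_mset (tag t) X = \<alpha> t)"
proof -
  have shapes: "set_mset (image_mset shape U) \<subseteq> shape ` J"
    using assms(1) by auto
  have labels: "1 \<le> fst p" if "t \<in> T" "p \<in># image_mset (tag t) U" for t p
    using that assms(1) label_pos by (auto simp: tag_def)
  have "set_mset \<sigma> \<subseteq> shape ` J"
    using mset_subset_eqD[OF assms(2)] shapes by blast
  moreover have "1 \<le> fst p" if "t \<in> T" "p \<in># \<alpha> t" for t p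
    using labels mset_subset_eqD[OF assms(3)] that by blast
  ultimately obtain X where X: "set_mset X \<subseteq> J" "image_mset shape X = \<sigma>"
    "\<forall>t\<in>T. image_mset (tag t) X = \<alpha> t"
    using exists_mset_with_tags[of \<sigma> \<alpha>] assms(4) by blast
  have "set_mset (image_mset shape U - \<sigma>) \<subseteq> shape ` J"
    using shapes by (meson in_diffD subset_iff)
  moreover have "image_mset snd (image_mset (tag t) U - \<alpha> t) = image_mset shape U - \<sigma>" if "t \<in> T" for t
    using assms(3,4)[OF that] by (simp add: image_mset_Diff snd_image_tag)
  moreover have "1 \<le> fst p" if "t \<in> T" "p \<in># image_mset (tag t) U - \<alpha> t" for t p
    using labels that by (meson in_diffD)
  ultimately obtain U0 where U0: "set_mset U0 \<subseteq> J" "image_mset shape U0 = image_mset shape U - \<sigma>"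
    "\<forall>t\<in>T. image_mset (tag t) U0 = image_mset (tag t) U - \<alpha> t"
    using exists_mset_with_tags[of "image_mset shape U - \<sigma>" "\<lambda>t. image_mset (tag t) U - \<alpha> t"]
    by blast
  have "same_tags U (X + U0)"
    unfolding same_tags_def using X U0 assms(2,3) by (simp add: subset_mset.add_diff_inverse)
  then show ?thesis
    using X U0 by auto
qed

lemma slice_pairs_add:
  "(A, B) \<in> slice_pairs t \<Longrightarrow> (C, D) \<in> slice_pairs t \<Longrightarrow> (A + C, B + D) \<in> slice_pairs t"
  unfolding slice_pairs_def by auto

lemma slice_pairs_diff:
  "(A, B) \<in> slice_pairs t \<Longrightarrow> (C, D) \<in> slice_pairs t \<Longrightarrow> C \<subseteq># A \<Longrightarrow> D \<subseteq># B \<Longrightarrow>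
    (A - C, B - D) \<in> slice_pairs t"
  unfolding slice_pairs_def by (auto simp: image_mset_Diff dest: in_diffD)

lemma slice_pairs_sum:
  "set_mset G \<subseteq> slice_pairs t \<Longrightarrow> ((\<Sum>g\<in>#G. fst g), (\<Sum>g\<in>#G. snd g)) \<in> slice_pairs t"
proof (induction G)
  case empty
  then show ?case
    by (simp add: slice_pairs_def)
next
  case (add g G)
  then show ?case
    using slice_pairs_add[of "fst g" "snd g"] by simp
qed

definition slice_basis :: "nat \<Rightarrow> ((nat \<Rightarrow> nat) multiset \<times> (nat \<Rightarrow> nat) multiset) set" where
  "slice_basis t = (SOME H. finite H \<and> H \<subseteq> slice_pairs t - {({#}, {#})} \<and>
     (\<forall>q \<in> slice_pairs t - {({#}, {#})}. \<exists>h\<in>H. fst h \<subseteq># fst q \<and> snd h \<subseteq># snd q))"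

lemma slice_basis:
  "finite (slice_basis t)" "slice_basis t \<subseteq> slice_pairs t - {({#}, {#})}"
  "q \<in> slice_pairs t - {({#}, {#})} \<Longrightarrow> \<exists>h\<in>slice_basis t. fst h \<subseteq># fst q \<and> snd h \<subseteq># snd q"
proof -
  have "\<exists>H. finite H \<and> H \<subseteq> slice_pairs t - {({#}, {#})} \<and>
      (\<forall>q \<in> slice_pairs t - {({#}, {#})}. \<exists>h\<in>H. fst h \<subseteq># fst q \<and> snd h \<subseteq># snd q)"
    by (rule finite_pair_basis[OF finite_shapes]) (auto simp: slice_pairs_def)
  from someI_ex[OF this] show "finite (slice_basis t)" "slice_basis t \<subseteq> slice_pairs t - {({#}, {#})}"
    "q \<in> slice_pairs t - {({#}, {#})} \<Longrightarrow> \<exists>h\<in>slice_basis t. fst h \<subseteq># fst q \<and> snd h \<subseteq># snd q"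
    unfolding slice_basis_def by blast+
qed

lemma slice_pair_decomposition:
  assumes "p \<in> slice_pairs t"
  shows "\<exists>G. set_mset G \<subseteq> slice_basis t \<and> fst p = (\<Sum>g\<in>#G. fst g) \<and> snd p = (\<Sum>g\<in>#G. snd g)"
  using assms
proof (induction "size (fst p) + size (snd p)" arbitrary: p rule: less_induct)
  case less
  show ?case
  proof (cases "p = ({#}, {#})")
    case True
    then show ?thesis
      by (intro exI[of _ "{#}"]) simp
  next
    case False
    then obtain h where h: "h \<in> slice_basis t" "fst h \<subseteq># fst p" "snd h \<subseteq># snd p"
      using slice_basis(3) less.prems by blast
    then have "h \<in> slice_pairs t" "h \<noteq> ({#}, {#})"
      using slice_basis(2) by auto
    define p' where "p' = (fst p - fst h, snd p - snd h)"
    have "p' \<in> slice_pairs t"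
      unfolding p'_def using slice_pairs_diff[of "fst p" "snd p" t "fst h" "snd h"] less.prems
        \<open>h \<in> slice_pairs t\<close> h(2,3) by simp
    moreover have "size (fst p') + size (snd p') < size (fst p) + size (snd p)"
      using h(2,3) \<open>h \<noteq> ({#}, {#})\<close> unfolding p'_def
      by (cases h) (auto simp: size_Diff_submset dest!: size_mset_mono
          simp flip: size_eq_0_iff_empty)
    ultimately obtain G where "set_mset G \<subseteq> slice_basis t"
      "fst p' = (\<Sum>g\<in>#G. fst g)" "snd p' = (\<Sum>g\<in>#G. snd g)"
      using less.hyps by blast
    moreover have "fst p = fst h + fst p'" "snd p = snd h + snd p'"
      using h(2,3) by (simp_all add: p'_def subset_mset.add_diff_inverse)
    ultimately show ?thesis
      using h(1) by (intro exI[of _ "add_mset h G"]) simp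
  qed
qed

lemma labelled_slice_decomposition:
  assumes "\<And>a. (slice a P, slice a P') \<in> slice_pairs t"
  shows "\<exists>D. set_mset (image_mset snd D) \<subseteq> slice_basis t \<and> P = spread fst D \<and> P' = spread snd D"
  using assms
proof (induction "size P + size P'" arbitrary: P P' rule: less_induct)
  case less
  show ?case
  proof (cases "P + P' = {#}")
    case True
    then show ?thesis
      by (intro exI[of _ "{#}"]) simp
  next
    case False
    then obtain a where a: "a \<in> fst ` set_mset (P + P')"
      by (metis all_not_in_conv empty_is_image set_mset_eq_empty_iff)
    obtain G where G: "set_mset G \<subseteq> slice_basis t"
      "slice a P = (\<Sum>g\<in>#G. fst g)" "slice a P' = (\<Sum>g\<in>#G. snd g)"
      using slice_pair_decomposition[OF less.prems[of a]] by auto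
    define R where "R = filter_mset (\<lambda>p. fst p \<noteq> a) P"
    define R' where "R' = filter_mset (\<lambda>p. fst p \<noteq> a) P'"
    have split: "P = image_mset (Pair a) (slice a P) + R" "P' = image_mset (Pair a) (slice a P') + R'"
      unfolding R_def R'_def image_Pair_slice by (simp_all add: multiset_partition[symmetric])
    have "(slice b R, slice b R') \<in> slice_pairs t" for b
      using less.prems[of b] unfolding R_def R'_def slice_filter_other
      by (simp add: slice_pairs_def)
    moreover have "size R + size R' < size P + size P'"
    proof -
      have "size R + size R' = size (filter_mset (\<lambda>p. fst p \<noteq> a) (P + P'))"
        unfolding R_def R'_def by simp
      also have "\<dots> < size (P + P')"
        using a size_filter_mset_less[of _ "P + P'" "\<lambda>p. fst p \<noteq> a"] by blast
      finally show ?thesis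
        by simp
    qed
    ultimately obtain D where D: "set_mset (image_mset snd D) \<subseteq> slice_basis t"
      "R = spread fst D" "R' = spread snd D"
      using less.hyps by blast
    have "image_mset snd (image_mset (Pair a) G) = G"
      by (simp add: image_mset.compositionality o_def)
    then show ?thesis
      using G(1) D split unfolding G(2,3)
      by (intro exI[of _ "image_mset (Pair a) G + D"]) (simp add: spread_image_Pair)
  qed
qed

definition profiles :: "((nat \<times> (nat \<Rightarrow> nat) multiset \<times> (nat \<Rightarrow> nat) multiset) multiset \<times>
    (nat \<Rightarrow> nat) multiset \<times> (nat \<Rightarrow> nat) multiset) set" where
  "profiles = {(L, \<sigma>, \<sigma>'). set_mset L \<subseteq> Sigma T slice_basis \<and> (\<sigma>, \<sigma>') \<in> untagged_pairs \<and>
     (\<forall>t\<in>T. (\<Sum>g\<in>#part t L. fst g) = \<sigma> \<and> (\<Sum>g\<in>#part t L. snd g) = \<sigma>') \<and>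
     (L, \<sigma>, \<sigma>') \<noteq> ({#}, {#}, {#})}"

definition profile_basis where
  "profile_basis = (SOME H. finite H \<and> H \<subseteq> profiles \<and> (\<forall>q\<in>profiles. \<exists>h\<in>H.
     fst h \<subseteq># fst q \<and> fst (snd h) \<subseteq># fst (snd q) \<and> snd (snd h) \<subseteq># snd (snd q)))"

lemma profile_basis:
  "finite profile_basis" "profile_basis \<subseteq> profiles"
  "q \<in> profiles \<Longrightarrow> \<exists>h\<in>profile_basis.
     fst h \<subseteq># fst q \<and> fst (snd h) \<subseteq># fst (snd q) \<and> snd (snd h) \<subseteq># snd (snd q)"
proof -
  define f where "f q = mset_pair (fst q) (mset_pair (fst (snd q)) (snd (snd q)))" for q
    :: "(nat \<times> (nat \<Rightarrow> nat) multiset \<times> (nat \<Rightarrow> nat) multiset) multiset \<times>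
        (nat \<Rightarrow> nat) multiset \<times> (nat \<Rightarrow> nat) multiset"
  define A where "A = Inl ` Sigma T slice_basis \<union> Inr ` (Inl ` shape ` J \<union> Inr ` shape ` J)"
  have "finite A"
    unfolding A_def using finite_T slice_basis(1) finite_shapes by auto
  moreover have "set_mset (f q) \<subseteq> A" if "q \<in> profiles" for q
    using that unfolding f_def A_def profiles_def untagged_pairs_def
    by (auto simp: set_mset_pair)
  ultimately have "\<exists>H. finite H \<and> H \<subseteq> profiles \<and> (\<forall>q\<in>profiles. \<exists>h\<in>H. f h \<subseteq># f q)"
    by (rule finite_multiset_basis)
  then have "\<exists>H. finite H \<and> H \<subseteq> profiles \<and> (\<forall>q\<in>profiles. \<exists>h\<in>H.
      fst h \<subseteq># fst q \<and> fst (snd h) \<subseteq># fst (snd q) \<and> snd (snd h) \<subseteq># snd (snd q))"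
    by (simp add: f_def mset_pair_subseteq_iff)
  from someI_ex[OF this] show "finite profile_basis" "profile_basis \<subseteq> profiles"
    "q \<in> profiles \<Longrightarrow> \<exists>h\<in>profile_basis.
       fst h \<subseteq># fst q \<and> fst (snd h) \<subseteq># fst (snd q) \<and> snd (snd h) \<subseteq># snd (snd q)"
    unfolding profile_basis_def by blast+
qed

definition profile_bound :: nat where
  "profile_bound = Max ((\<lambda>q. size (fst (snd q)) + size (snd (snd q))) ` profile_basis)"

lemma profiles_nonzero:
  assumes "(L, \<sigma>, \<sigma>') \<in> profiles"
  shows "\<sigma> + \<sigma>' \<noteq> {#}"
proof
  assume zero: "\<sigma> + \<sigma>' = {#}"
  then have "L \<noteq> {#}"
    using assms unfolding profiles_def by auto
  then obtain t g where tg: "(t, g) \<in># L"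
    by (metis multiset_nonemptyE surj_pair)
  then have "t \<in> T" "g \<in> slice_basis t"
    using assms unfolding profiles_def by auto
  have "g \<in># part t L"
    using tg unfolding part_def by force
  moreover have "(\<Sum>g\<in>#part t L. fst g) = \<sigma>" "(\<Sum>g\<in>#part t L. snd g) = \<sigma>'"
    using assms \<open>t \<in> T\<close> unfolding profiles_def by auto
  ultimately have "fst g \<subseteq># \<sigma>" "snd g \<subseteq># \<sigma>'"
    using member_le_sum_mset by metis+
  then have "g = ({#}, {#})"
    using zero by (simp add: prod_eq_iff)
  then show False
    using \<open>g \<in> slice_basis t\<close> slice_basis(2) by blast
qed

lemma exists_profile:
  assumes UJ: "set_mset U \<subseteq> J" and VJ: "set_mset V \<subseteq> J"
    and margins: "same_margins U V" and nonempty: "U + V \<noteq> {#}"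
  shows "\<exists>DD. (\<forall>t\<in>T. image_mset (tag t) U = spread fst (part t DD) \<and>
      image_mset (tag t) V = spread snd (part t DD)) \<and>
    (image_mset (map_prod id snd) DD, image_mset shape U, image_mset shape V) \<in> profiles"
proof -
  have untagged: "(image_mset shape U, image_mset shape V) \<in> untagged_pairs"
    and slices: "\<And>t a. t \<in> T \<Longrightarrow>
      (slice a (image_mset (tag t) U), slice a (image_mset (tag t) V)) \<in> slice_pairs t"
    using margins same_margins_iff_slices[OF UJ VJ] by auto
  obtain D where D: "\<And>t. t \<in> T \<Longrightarrow> set_mset (image_mset snd (D t)) \<subseteq> slice_basis t \<and>
      image_mset (tag t) U = spread fst (D t) \<and> image_mset (tag t) V = spread snd (D t)"
    using labelled_slice_decomposition[OF slices] by metis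
  define DD where "DD = (\<Sum>t\<in>T. image_mset (Pair t) (D t))"
  define L where "L = image_mset (map_prod id snd) DD"
  have part_DD: "part t DD = D t" if "t \<in> T" for t
    unfolding DD_def using finite_T that by (rule part_sum_Pair)
  have part_L: "part t L = image_mset snd (D t)" if "t \<in> T" for t
    unfolding L_def part_image_map_prod part_DD[OF that] ..
  have "set_mset L \<subseteq> Sigma T slice_basis"
  proof
    fix x
    assume "x \<in># L"
    then obtain t d where "t \<in> T" "d \<in># D t" "x = (t, snd d)"
      unfolding L_def DD_def using finite_T by (auto simp: set_mset_sum)
    then show "x \<in> Sigma T slice_basis"
      using D by fastforce
  qed
  moreover have "(\<Sum>g\<in>#part t L. fst g) = image_mset shape U"
    "(\<Sum>g\<in>#part t L. snd g) = image_mset shape V" if "t \<in> T" for t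
    using D[OF that] snd_image_tag[of t U] snd_image_tag[of t V]
    by (simp_all add: part_L[OF that] sum_image_snd_spread)
  moreover have "image_mset shape U + image_mset shape V \<noteq> {#}"
    using nonempty by simp
  ultimately have "(L, image_mset shape U, image_mset shape V) \<in> profiles"
    using untagged unfolding profiles_def by auto
  then show ?thesis
    using D part_DD unfolding L_def by metis
qed

lemma subprofile_tag_data:
  assumes "(Lh, \<sigma>, \<sigma>') \<in> profiles" "Lh \<subseteq># image_mset (map_prod id snd) DD"
  shows "\<exists>DD'. DD' \<subseteq># DD \<and> (\<forall>t\<in>T.
    image_mset snd (spread fst (part t DD')) = \<sigma> \<and> image_mset snd (spread snd (part t DD')) = \<sigma>' \<and>
    (\<forall>a. (slice a (spread fst (part t DD')), slice a (spread snd (part t DD'))) \<in> slice_pairs t))"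
proof -
  obtain DD' where DD': "DD' \<subseteq># DD" "image_mset (map_prod id snd) DD' = Lh"
    using subseteq_image_mset_lift[OF assms(2)] by blast
  have part_Lh: "part t Lh = image_mset snd (part t DD')" for t
    unfolding DD'(2)[symmetric] part_image_map_prod ..
  have "image_mset snd (spread fst (part t DD')) = \<sigma>" "image_mset snd (spread snd (part t DD')) = \<sigma>'"
    if "t \<in> T" for t
    using assms(1) that unfolding profiles_def by (auto simp flip: sum_image_snd_spread part_Lh)
  moreover have "(slice a (spread fst (part t DD')), slice a (spread snd (part t DD'))) \<in> slice_pairs t"
    if "t \<in> T" for t a
  proof -
    have "set_mset (part t Lh) \<subseteq> slice_basis t"
      using assms(1) unfolding profiles_def part_def by auto
    then have "set_mset (image_mset snd (filter_mset (\<lambda>d. fst d = a) (part t DD'))) \<subseteq> slice_pairs t"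
      using slice_basis(2) unfolding part_Lh by auto
    from slice_pairs_sum[OF this] show ?thesis
      by (simp add: slice_spread image_mset.compositionality o_def)
  qed
  ultimately show ?thesis
    using DD'(1) by blast
qed

lemma exists_small_tag_data:
  assumes UJ: "set_mset U \<subseteq> J" and VJ: "set_mset V \<subseteq> J"
    and margins: "same_margins U V" and nonempty: "U + V \<noteq> {#}"
  shows "\<exists>\<sigma> \<sigma>' \<alpha> \<beta>. \<sigma> \<subseteq># image_mset shape U \<and> \<sigma>' \<subseteq># image_mset shape V \<and>
    (\<sigma>, \<sigma>') \<in> untagged_pairs \<and> size \<sigma> + size \<sigma>' \<le> profile_bound \<and> \<sigma> + \<sigma>' \<noteq> {#} \<and>
    (\<forall>t\<in>T. \<alpha> t \<subseteq># image_mset (tag t) U \<and> \<beta> t \<subseteq># image_mset (tag t) V \<and>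
      image_mset snd (\<alpha> t) = \<sigma> \<and> image_mset snd (\<beta> t) = \<sigma>' \<and>
      (\<forall>a. (slice a (\<alpha> t), slice a (\<beta> t)) \<in> slice_pairs t))"
proof -
  obtain DD where DD: "\<forall>t\<in>T. image_mset (tag t) U = spread fst (part t DD) \<and>
      image_mset (tag t) V = spread snd (part t DD)"
    and profile: "(image_mset (map_prod id snd) DD, image_mset shape U, image_mset shape V) \<in> profiles"
    using exists_profile[OF assms] by blast
  obtain Lh \<sigma> \<sigma>' where h: "(Lh, \<sigma>, \<sigma>') \<in> profile_basis" "Lh \<subseteq># image_mset (map_prod id snd) DD"
    "\<sigma> \<subseteq># image_mset shape U" "\<sigma>' \<subseteq># image_mset shape V"
    using profile_basis(3)[OF profile] by auto
  then have "(Lh, \<sigma>, \<sigma>') \<in> profiles"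
    using profile_basis(2) by blast
  then obtain DD' where DD': "DD' \<subseteq># DD" "\<forall>t\<in>T.
      image_mset snd (spread fst (part t DD')) = \<sigma> \<and> image_mset snd (spread snd (part t DD')) = \<sigma>' \<and>
      (\<forall>a. (slice a (spread fst (part t DD')), slice a (spread snd (part t DD'))) \<in> slice_pairs t)"
    using subprofile_tag_data h(2) by blast
  have "spread sel (part t DD') \<subseteq># spread sel (part t DD)" for sel t
    using DD'(1) by (intro spread_mono part_mono)
  moreover have "size \<sigma> + size \<sigma>' \<le> profile_bound"
    unfolding profile_bound_def using h(1) profile_basis(1) by (force intro: Max_ge)
  moreover have "\<sigma> + \<sigma>' \<noteq> {#}"
    using profiles_nonzero \<open>(Lh, \<sigma>, \<sigma>') \<in> profiles\<close> by blast
  moreover have "(\<sigma>, \<sigma>') \<in> untagged_pairs"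
    using \<open>(Lh, \<sigma>, \<sigma>') \<in> profiles\<close> unfolding profiles_def by blast
  ultimately show ?thesis
    using h(3,4) DD DD'(2)
    by (intro exI[of _ \<sigma>] exI[of _ \<sigma>'] exI[of _ "\<lambda>t. spread fst (part t DD')"]
        exI[of _ "\<lambda>t. spread snd (part t DD')"]) auto
qed

definition small_pairs :: "nat \<Rightarrow> ((nat \<Rightarrow> nat) multiset \<times> (nat \<Rightarrow> nat) multiset) set" where
  "small_pairs d = {(X, Y). same_margins X Y \<and> set_mset X \<subseteq> J \<and> set_mset Y \<subseteq> J \<and>
     size X \<le> d \<and> size Y \<le> d}"

lemma exists_small_exchange:
  assumes UJ: "set_mset U \<subseteq> J" and VJ: "set_mset V \<subseteq> J"
    and margins: "same_margins U V" and nonempty: "U + V \<noteq> {#}"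
  shows "\<exists>X Y U0 V0. same_tags U (X + U0) \<and> same_tags V (Y + V0) \<and> same_margins X Y \<and>
    size X + size Y \<le> profile_bound \<and> X + Y \<noteq> {#} \<and> set_mset (X + U0) \<subseteq> J \<and> set_mset (Y + V0) \<subseteq> J"
proof -
  obtain \<sigma> \<sigma>' \<alpha> \<beta> where data: "\<sigma> \<subseteq># image_mset shape U" "\<sigma>' \<subseteq># image_mset shape V"
    "(\<sigma>, \<sigma>') \<in> untagged_pairs" "size \<sigma> + size \<sigma>' \<le> profile_bound" "\<sigma> + \<sigma>' \<noteq> {#}"
    "\<forall>t\<in>T. \<alpha> t \<subseteq># image_mset (tag t) U \<and> \<beta> t \<subseteq># image_mset (tag t) V \<and>
      image_mset snd (\<alpha> t) = \<sigma> \<and> image_mset snd (\<beta> t) = \<sigma>' \<and>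
      (\<forall>a. (slice a (\<alpha> t), slice a (\<beta> t)) \<in> slice_pairs t)"
    using exists_small_tag_data[OF assms] by blast
  obtain X U0 where X: "set_mset (X + U0) \<subseteq> J" "same_tags U (X + U0)" "image_mset shape X = \<sigma>"
    "\<forall>t\<in>T. image_mset (tag t) X = \<alpha> t"
    using split_off_tags[OF UJ data(1)] data(6) by blast
  obtain Y V0 where Y: "set_mset (Y + V0) \<subseteq> J" "same_tags V (Y + V0)" "image_mset shape Y = \<sigma>'"
    "\<forall>t\<in>T. image_mset (tag t) Y = \<beta> t"
    using split_off_tags[OF VJ data(2)] data(6) by blast
  have "same_margins X Y"
    using same_margins_iff_slices[of X Y] X Y data(3,6) by auto
  moreover have "size X + size Y \<le> profile_bound" "X + Y \<noteq> {#}"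
    using data(4,5) X(3) Y(3) by (metis size_image_mset, auto)
  ultimately show ?thesis
    using X Y by blast
qed

definition exchange_degree :: nat where
  "exchange_degree = max 2 profile_bound"

lemma swap_pairs_small: "swap_pairs \<subseteq> small_pairs exchange_degree"
proof
  fix p
  assume "p \<in> swap_pairs"
  moreover from this obtain X Y where "p = (X, Y)"
    by fastforce
  ultimately show "p \<in> small_pairs exchange_degree"
    using swap_pairs_same_tags swap_pairs_in_J same_tags_imp_same_margins
    unfolding small_pairs_def swap_pairs_def exchange_degree_def by fastforce
qed

lemma swap_path_small: "(moves swap_pairs)\<^sup>*\<^sup>* U V \<Longrightarrow> (moves (small_pairs exchange_degree))\<^sup>*\<^sup>* U V"
  using moves_mono[OF swap_pairs_small] .

lemma size_eq_if_same_tags: "same_tags U V \<Longrightarrow> size U = size V"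
  unfolding same_tags_def by (metis size_image_mset)

lemma small_moves_connect:
  assumes "same_margins U V" "set_mset U \<subseteq> J" "set_mset V \<subseteq> J"
  shows "(moves (small_pairs exchange_degree))\<^sup>*\<^sup>* U V"
  using assms
proof (induction "size U + size V" arbitrary: U V rule: less_induct)
  case less
  show ?case
  proof (cases "U + V = {#}")
    case False
    obtain X Y U0 V0 where exchange: "same_tags U (X + U0)" "same_tags V (Y + V0)"
      "same_margins X Y" "size X + size Y \<le> profile_bound" "X + Y \<noteq> {#}"
      "set_mset (X + U0) \<subseteq> J" "set_mset (Y + V0) \<subseteq> J"
      using exists_small_exchange[OF less.prems(2,3,1) False] by blast
    have "same_margins (X + U0) (Y + V0)"
      using less.prems(1) exchange(1,2)[THEN same_tags_imp_same_margins] unfolding same_margins_def by simp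
    then have "same_margins U0 V0"
      using exchange(3) unfolding same_margins_def by simp
    moreover have "size U0 + size V0 < size U + size V"
      using exchange(5) size_eq_if_same_tags[OF exchange(1)] size_eq_if_same_tags[OF exchange(2)]
      by (simp add: nonempty_has_size)
    ultimately have "(moves (small_pairs exchange_degree))\<^sup>*\<^sup>* U0 V0"
      using less.hyps exchange(6,7) by auto
    then have middle: "(moves (small_pairs exchange_degree))\<^sup>*\<^sup>* (Y + U0) (Y + V0)"
      using moves_add_right by (metis add.commute)
    have "(X, Y) \<in> small_pairs exchange_degree"
      using exchange(3,4,6,7) unfolding small_pairs_def exchange_degree_def by auto
    then have "moves (small_pairs exchange_degree) (X + U0) (Y + U0)"
      unfolding moves_def by blast
    moreover have "(moves (small_pairs exchange_degree))\<^sup>*\<^sup>* U (X + U0)"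
      "(moves (small_pairs exchange_degree))\<^sup>*\<^sup>* (Y + V0) V"
      using exchange less.prems(2,3) by (auto intro!: swap_path_small same_tags_imp_swap_path
          simp: same_tags_def)
    ultimately show ?thesis
      using middle by (meson rtranclp.rtrancl_into_rtrancl rtranclp_trans)
  qed simp
qed

subsection \<open>Finitely many moves up to symmetry\<close>

lemma act_idx_in_J:
  assumes "\<sigma> \<in> Sym" "i \<in> J"
  shows "act_idx T \<sigma> i \<in> J"
proof -
  have "\<sigma> (i t) \<noteq> 0" if "t \<in> T" for t
    using Sym_nonzero[OF assms(1)] label_pos[OF assms(2) that] by simp
  then show ?thesis
    using assms(2) T_sub unfolding idx_set_def act_idx_def by (auto simp: Suc_le_eq)
qed

lemma same_margins_act:
  assumes "\<sigma> 0 = 0" "same_margins X Y"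
  shows "same_margins (image_mset (act_idx T \<sigma>) X) (image_mset (act_idx T \<sigma>) Y)"
proof -
  have "image_mset (restr F) (image_mset (act_idx T \<sigma>) W)
      = image_mset (act_idx T \<sigma>) (image_mset (restr F) W)" for F W
    by (simp add: image_mset.compositionality o_def restr_act_idx[where \<sigma> = \<sigma>, OF assms(1)])
  then show ?thesis
    using assms(2) unfolding same_margins_def by simp
qed

text \<open>A pair of bounded degree uses at most \<open>label_bound\<close> distinct labels, so a finitary
  permutation moves all of them into \<open>{1..label_bound}\<close>.\<close>

definition label_bound :: nat where
  "label_bound = card T * (2 * exchange_degree)"

definition representative_pairs :: "((nat \<Rightarrow> nat) multiset \<times> (nat \<Rightarrow> nat) multiset) set" where
  "representative_pairs = {(X, Y) \<in> small_pairs exchange_degree.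
     \<forall>i \<in> set_mset X \<union> set_mset Y. \<forall>t\<in>T. i t \<le> label_bound}"

definition Sym_pairs :: "((nat \<Rightarrow> nat) multiset \<times> (nat \<Rightarrow> nat) multiset) set" where
  "Sym_pairs = {(image_mset (act_idx T \<sigma>) X, image_mset (act_idx T \<sigma>) Y) | \<sigma> X Y.
     \<sigma> \<in> Sym \<and> (X, Y) \<in> representative_pairs}"

lemma finite_representative_pairs: "finite representative_pairs"
proof -
  define I where "I = {i \<in> J. \<forall>t\<in>T. i t \<le> label_bound}"
  define b where "b = max label_bound (Max (r ` {1..m}))"
  have "I \<subseteq> {i. (\<forall>j. j \<notin> {1..m} \<longrightarrow> i j = 0) \<and> (\<forall>j\<in>{1..m}. i j \<le> b)}"
    using index_bounded unfolding I_def b_def by (fastforce simp: le_max_iff_disj)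
  then have "finite I"
    using finite_bounded_tuples by (rule finite_subset)
  then have "finite {M. set_mset M \<subseteq> I \<and> size M \<le> exchange_degree}"
    by (rule finite_bounded_msets)
  moreover have "representative_pairs \<subseteq>
      {M. set_mset M \<subseteq> I \<and> size M \<le> exchange_degree} \<times> {M. set_mset M \<subseteq> I \<and> size M \<le> exchange_degree}"
    unfolding representative_pairs_def small_pairs_def I_def by auto
  ultimately show ?thesis
    by (meson finite_SigmaI finite_subset)
qed

lemma Sym_pairs_small: "Sym_pairs \<subseteq> small_pairs exchange_degree"
proof
  fix p
  assume "p \<in> Sym_pairs"
  then obtain \<sigma> X Y where "\<sigma> \<in> Sym" "(X, Y) \<in> representative_pairs"
    "p = (image_mset (act_idx T \<sigma>) X, image_mset (act_idx T \<sigma>) Y)"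
    unfolding Sym_pairs_def by blast
  moreover have "\<sigma> 0 = 0"
    using \<open>\<sigma> \<in> Sym\<close> unfolding Sym_def by blast
  ultimately show "p \<in> small_pairs exchange_degree"
    using same_margins_act act_idx_in_J unfolding representative_pairs_def small_pairs_def by auto
qed

lemma small_pairs_Sym_pairs: "small_pairs exchange_degree \<subseteq> Sym_pairs"
proof safe
  fix X Y
  assume XY: "(X, Y) \<in> small_pairs exchange_degree"
  define L where "L = (\<lambda>(i, t). i t) ` ((set_mset X \<union> set_mset Y) \<times> T)"
  have "finite L"
    unfolding L_def using finite_T by simp
  have "card L \<le> card (set_mset X \<union> set_mset Y) * card T"
    unfolding L_def using finite_T by (metis card_cartesian_product card_image_le finite_SigmaI
        finite_Un finite_set_mset)
  also have "\<dots> \<le> (size X + size Y) * card T"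
    by (intro mult_right_mono order.trans[OF card_Un_le] add_mono card_set_mset_le) simp
  also have "\<dots> \<le> label_bound"
    using XY unfolding small_pairs_def label_bound_def by (simp add: mult.commute)
  finally have "card L \<le> label_bound" .
  moreover have "0 \<notin> L"
    using XY label_pos unfolding L_def small_pairs_def by fastforce
  ultimately obtain \<tau> where \<tau>: "\<tau> \<in> Sym" "\<tau> ` L \<subseteq> {1..label_bound}"
    using Sym_relabel_into_interval \<open>finite L\<close> by blast
  then have "bij \<tau>" "\<tau> 0 = 0"
    unfolding Sym_def by auto
  define X0 where "X0 = image_mset (act_idx T \<tau>) X"
  define Y0 where "Y0 = image_mset (act_idx T \<tau>) Y"
  have "(X0, Y0) \<in> small_pairs exchange_degree"
    using XY same_margins_act[where \<sigma> = \<tau>, OF \<open>\<tau> 0 = 0\<close>] act_idx_in_J[OF \<tau>(1)]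
    unfolding X0_def Y0_def small_pairs_def by auto
  moreover have "\<tau> (i t) \<le> label_bound" if "i \<in> set_mset X \<union> set_mset Y" "t \<in> T" for i t
    using \<tau>(2) that unfolding L_def by force
  ultimately have "(X0, Y0) \<in> representative_pairs"
    unfolding representative_pairs_def X0_def Y0_def act_idx_def by auto
  moreover have "X = image_mset (act_idx T (inv \<tau>)) X0" "Y = image_mset (act_idx T (inv \<tau>)) Y0"
    unfolding X0_def Y0_def by (simp_all add: image_mset.compositionality o_def act_idx_inv[OF \<open>bij \<tau>\<close>])
  ultimately show "(X, Y) \<in> Sym_pairs"
    unfolding Sym_pairs_def using Sym_inv[OF \<tau>(1)] by blast
qed

lemma diff_in_ker_mu_iff:
  assumes "set_mset X \<subseteq> J" "set_mset Y \<subseteq> J"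
  shows "vec_of_mset X - vec_of_mset Y \<in> ker_mu m Fs T r \<longleftrightarrow> same_margins X Y"
proof -
  have "vec_of_mset A - vec_of_mset B = (\<lambda>_. 0) \<longleftrightarrow> A = B" for A B :: "(nat \<Rightarrow> nat) multiset"
    unfolding vec_of_mset_inject[symmetric] by (simp add: fun_eq_iff)
  then show ?thesis
    using vec_of_mset_diff_in_fin_vecs[OF assms]
    unfolding ker_mu_def same_margins_def by (simp add: mu_comp_vec_of_mset_diff)
qed

lemma Sym_images_representative_diffs:
  "{act_vec T \<sigma> b | \<sigma> b. \<sigma> \<in> Sym \<and> b \<in> (\<lambda>(X, Y). vec_of_mset X - vec_of_mset Y) ` representative_pairs}
    = (\<lambda>(X, Y). vec_of_mset X - vec_of_mset Y) ` Sym_pairs"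
proof (intro equalityI subsetI)
  fix d
  assume "d \<in> {act_vec T \<sigma> b | \<sigma> b. \<sigma> \<in> Sym \<and>
      b \<in> (\<lambda>(X, Y). vec_of_mset X - vec_of_mset Y) ` representative_pairs}"
  then obtain \<sigma> X Y where "\<sigma> \<in> Sym" "(X, Y) \<in> representative_pairs"
    "d = act_vec T \<sigma> (vec_of_mset X - vec_of_mset Y)"
    by auto
  moreover from this have "(image_mset (act_idx T \<sigma>) X, image_mset (act_idx T \<sigma>) Y) \<in> Sym_pairs"
    unfolding Sym_pairs_def by blast
  ultimately show "d \<in> (\<lambda>(X, Y). vec_of_mset X - vec_of_mset Y) ` Sym_pairs"
    by (force simp: act_vec_vec_of_mset_diff)
next
  fix d
  assume "d \<in> (\<lambda>(X, Y). vec_of_mset X - vec_of_mset Y) ` Sym_pairs"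
  then obtain \<sigma> X Y where "\<sigma> \<in> Sym" "(X, Y) \<in> representative_pairs"
    "d = vec_of_mset (image_mset (act_idx T \<sigma>) X) - vec_of_mset (image_mset (act_idx T \<sigma>) Y)"
    unfolding Sym_pairs_def by auto
  then show "d \<in> {act_vec T \<sigma> b | \<sigma> b. \<sigma> \<in> Sym \<and>
      b \<in> (\<lambda>(X, Y). vec_of_mset X - vec_of_mset Y) ` representative_pairs}"
    by (force simp flip: act_vec_vec_of_mset_diff)
qed

lemma Sym_path_imp_fiber_path:
  assumes "(moves Sym_pairs)\<^sup>*\<^sup>* V W" "set_mset V \<subseteq> J" "set_mset U \<subseteq> J" "same_margins U V"
  defines "F \<equiv> fiber J (ker_mu m Fs T r) (vec_of_mset U)"
    and "S \<equiv> (\<lambda>(X, Y). vec_of_mset X - vec_of_mset Y) ` Sym_pairs"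
  shows "(\<lambda>x y. x \<in> F \<and> y \<in> F \<and> (x - y \<in> S \<or> y - x \<in> S))\<^sup>*\<^sup>* (vec_of_mset V) (vec_of_mset W)"
proof -
  let ?R = "\<lambda>x y. x \<in> F \<and> y \<in> F \<and> (x - y \<in> S \<or> y - x \<in> S)"
  have in_F: "vec_of_mset V' \<in> F \<longleftrightarrow> same_margins U V'" if "set_mset V' \<subseteq> J" for V'
    using vec_of_mset_in_nonneg_vecs[OF that] diff_in_ker_mu_iff[OF assms(3) that]
    unfolding F_def fiber_def by auto
  from assms(1) have "?R\<^sup>*\<^sup>* (vec_of_mset V) (vec_of_mset W) \<and> set_mset W \<subseteq> J \<and> same_margins U W"
  proof induction
    case (step V1 V2)
    then obtain X Y Z where XY: "(X, Y) \<in> Sym_pairs" "V1 = X + Z" "V2 = Y + Z"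
      unfolding moves_def by blast
    then have "same_margins X Y" "set_mset Y \<subseteq> J"
      using Sym_pairs_small unfolding small_pairs_def by auto
    then have V2: "set_mset V2 \<subseteq> J" "same_margins U V2"
      using step.IH XY(2,3) unfolding same_margins_def by auto
    have "vec_of_mset V1 - vec_of_mset V2 = vec_of_mset X - vec_of_mset Y"
      unfolding XY(2,3) vec_of_mset_def by (simp add: fun_eq_iff)
    then have "vec_of_mset V1 - vec_of_mset V2 \<in> S"
      unfolding S_def using XY(1) by auto
    then have "?R (vec_of_mset V1) (vec_of_mset V2)"
      using step.IH V2 in_F by auto
    then have "?R\<^sup>*\<^sup>* (vec_of_mset V) (vec_of_mset V2)"
      by (rule rtranclp.rtrancl_into_rtrancl[OF conjunct1[OF step.IH]])
    then show ?case
      using V2 by blast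
  qed (use assms(2,4) in simp)
  then show ?thesis
    by blast
qed

lemma markov_basis_Sym_pairs:
  "markov_basis J (ker_mu m Fs T r) ((\<lambda>(X, Y). vec_of_mset X - vec_of_mset Y) ` Sym_pairs)"
  unfolding markov_basis_def
proof (intro conjI ballI)
  show "(\<lambda>(X, Y). vec_of_mset X - vec_of_mset Y) ` Sym_pairs \<subseteq> ker_mu m Fs T r"
    using Sym_pairs_small diff_in_ker_mu_iff unfolding small_pairs_def by auto
next
  fix u v w
  assume u: "u \<in> nonneg_vecs J" and "v \<in> fiber J (ker_mu m Fs T r) u" "w \<in> fiber J (ker_mu m Fs T r) u"
  then have "v \<in> nonneg_vecs J" "w \<in> nonneg_vecs J" "u - v \<in> ker_mu m Fs T r" "u - w \<in> ker_mu m Fs T r"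
    unfolding fiber_def by auto
  moreover define U V W where "U = mset_of_vec u" and "V = mset_of_vec v" and "W = mset_of_vec w"
  ultimately have UVW: "vec_of_mset U = u" "vec_of_mset V = v" "vec_of_mset W = w"
    "set_mset U \<subseteq> J" "set_mset V \<subseteq> J" "set_mset W \<subseteq> J"
    using u by (simp_all add: mset_of_vec_inverse)
  then have "same_margins U V" "same_margins U W"
    using \<open>u - v \<in> _\<close> \<open>u - w \<in> _\<close> diff_in_ker_mu_iff by auto
  then have "(moves Sym_pairs)\<^sup>*\<^sup>* V W"
    using small_moves_connect[OF _ UVW(5,6)] moves_mono[OF small_pairs_Sym_pairs]
    unfolding same_margins_def by simp
  from Sym_path_imp_fiber_path[OF this UVW(5,4) \<open>same_margins U V\<close>]
  show "(\<lambda>x y. x \<in> fiber J (ker_mu m Fs T r) u \<and> y \<in> fiber J (ker_mu m Fs T r) u \<and>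
      (x - y \<in> (\<lambda>(X, Y). vec_of_mset X - vec_of_mset Y) ` Sym_pairs \<or>
       y - x \<in> (\<lambda>(X, Y). vec_of_mset X - vec_of_mset Y) ` Sym_pairs))\<^sup>*\<^sup>* v w"
    unfolding UVW(1-3) .
qed

theorem finite_equivariant_markov_basis:
  "\<exists>B. finite B \<and> equivariant_markov_basis T J (ker_mu m Fs T r) B"
proof (intro exI conjI)
  let ?B = "(\<lambda>(X, Y). vec_of_mset X - vec_of_mset Y) ` representative_pairs"
  show "finite ?B"
    using finite_representative_pairs by simp
  have "?B \<subseteq> ker_mu m Fs T r"
    using diff_in_ker_mu_iff unfolding representative_pairs_def small_pairs_def by auto
  then show "equivariant_markov_basis T J (ker_mu m Fs T r) ?B"
    unfolding equivariant_markov_basis_def Sym_images_representative_diffs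
    using markov_basis_Sym_pairs by blast
qed

end

theorem corollary5p8:
  fixes m :: nat and Fs :: "nat set list" and T :: "nat set" and r :: "nat \<Rightarrow> nat"
  assumes facets_sub: "\<forall>k < length Fs. Fs ! k \<subseteq> {1..m}"
    and facets_antichain: "\<forall>k < length Fs. \<forall>l < length Fs. k \<noteq> l \<longrightarrow> \<not> (Fs ! k \<subseteq> Fs ! l)"
    and T_sub: "T \<subseteq> {1..m}"
    and T_indep: "\<forall>k < length Fs. card (T \<inter> Fs ! k) \<le> 1"
    and r_pos: "\<forall>j \<in> {1..m} - T. 1 \<le> r j"
  shows "\<exists>B. finite B \<and> equivariant_markov_basis T (idx_set m T r) (ker_mu m Fs T r) B"
proof -
  interpret independent_set_model m Fs T r
    using T_sub T_indep by unfold_locales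
  show ?thesis
    by (rule finite_equivariant_markov_basis)
qed

end
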